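(* Let $C>e^{-1}$ and $\varepsilon\in(0,1)$ be constants. Suppose $\frac{C^2(\log_2 n)^2}{n}\le x_\gamma\le1-\varepsilon$. Then for every $T>0$ and all sufficiently large $n$, from any initial configuration: $$\Pr[\tau^+_\gamma\ge T]\le\frac{64e^2}{\varepsilon}\cdot\frac{x_\gamma n}{T}\ \text{for 3-Majority},\qquad \Pr[\tau^+_\gamma\ge T]\le\frac{192e^2}{\varepsilon^2}\cdot\frac{x_\gamma n^2}{T}\ \text{for 2-Choices}.$$
   Context: **Setting.** Let $V$ be a set of $n$ vertices and $k\in\{1,\dots,n\}$. A configuration is a map $\mathsf{opn}\colon V\to[k]$. The process is synchronous: each round $t\ge1$ produces $\mathsf{opn}_t$ from $\mathsf{opn}_{t-1}$, and all vertices make their choices independently. **3-Majority.** Each vertex $v$ samples $w_1,w_2,w_3\in V$ independently and uniformly, with replacement. It sets $\mathsf{opn}_t(v)=\mathsf{opn}_{t-1}(w_1)$ if $\mathsf{opn}_{t-1}(w_1)=\mathsf{opn}_{t-1}(w_2)$, and $\mathsf{opn}_t(v)=\mathsf{opn}_{t-1}(w_3)$ otherwise. **2-Choices.** Each vertex $v$ samples $w_1,w_2\in V$ independently and uniformly, with replacement. It sets $\mathsf{opn}_t(v)=\mathsf{opn}_{t-1}(w_1)$ if $\mathsf{opn}_{t-1}(w_1)=\mathsf{opn}_{t-1}(w_2)$, and $\mathsf{opn}_t(v)=\mathsf{opn}_{t-1}(v)$ otherwise. **Basic quantities.** - $\alpha_t(i)=|\{v:\mathsf{opn}_t(v)=i\}|/n$.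 - $\gamma_t=\sum_i\alpha_t(i)^2$. - $\tau^+_\gamma=\inf\{t\ge0:\gamma_t\ge x_\gamma\}$. *)

theory Defs
  imports "HOL-Probability.Probability"
begin

text \<open>Vertices are V = {0..<n}; opinions are [k] = {1..k}; a configuration is a map
  nat => nat (only its values on V matter).\<close>

type_synonym config = "nat \<Rightarrow> nat"

definition alpha :: "nat \<Rightarrow> config \<Rightarrow> nat \<Rightarrow> real" where
  "alpha n opn i = real (card {v \<in> {0..<n}. opn v = i}) / real n"

definition gamma :: "nat \<Rightarrow> nat \<Rightarrow> config \<Rightarrow> real" where
  "gamma n k opn = (\<Sum>i\<in>{1..k}. (alpha n opn i)^2)"

definition three_majority_vertex :: "nat \<Rightarrow> config \<Rightarrow> nat pmf" where
  "three_majority_vertex n opn =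
     do { w1 \<leftarrow> pmf_of_set {0..<n}; w2 \<leftarrow> pmf_of_set {0..<n}; w3 \<leftarrow> pmf_of_set {0..<n};
          return_pmf (if opn w1 = opn w2 then opn w1 else opn w3) }"

definition two_choices_vertex :: "nat \<Rightarrow> config \<Rightarrow> nat \<Rightarrow> nat pmf" where
  "two_choices_vertex n opn v =
     do { w1 \<leftarrow> pmf_of_set {0..<n}; w2 \<leftarrow> pmf_of_set {0..<n};
          return_pmf (if opn w1 = opn w2 then opn w1 else opn v) }"

definition three_majority_step :: "nat \<Rightarrow> config \<Rightarrow> config pmf" where
  "three_majority_step n opn = Pi_pmf {0..<n} 0 (\<lambda>v. three_majority_vertex n opn)"

definition two_choices_step :: "nat \<Rightarrow> config \<Rightarrow> config pmf" where
  "two_choices_step n opn = Pi_pmf {0..<n} 0 (\<lambda>v. two_choices_vertex n opn v)"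

fun traj :: "(config \<Rightarrow> config pmf) \<Rightarrow> config \<Rightarrow> nat \<Rightarrow> config list pmf" where
  "traj K opn 0 = return_pmf [opn]"
| "traj K opn (Suc m) = bind_pmf (K opn) (\<lambda>opn'. map_pmf (\<lambda>l. opn # l) (traj K opn' m))"

text \<open>Pr[tau^+_gamma >= T], where tau^+_gamma = inf {t >= 0. gamma_t >= x_gamma}:
  the event that gamma_t < x_gamma for every integer t with 0 <= t < T.
  Rounds 0..ceil(T) cover all such t.\<close>
definition tau_gamma_ge_prob ::
  "(config \<Rightarrow> config pmf) \<Rightarrow> nat \<Rightarrow> nat \<Rightarrow> real \<Rightarrow> config \<Rightarrow> real \<Rightarrow> real" where
  "tau_gamma_ge_prob K n k x_gamma opn0 T =
     measure_pmf.prob (traj K opn0 (nat \<lceil>T\<rceil>))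
       {l. \<forall>t<length l. real t < T \<longrightarrow> gamma n k (l ! t) < x_gamma}"

end

theory Submission
  imports Defs "HOL-Real_Asymp.Real_Asymp"
begin

(* Let d be a lower bound on the one-round drift E[gamma'] - gamma of the collision probability
   while gamma < x (d = eps/n for 3-Majority, d = eps^2/n^2 for 2-Choices). A round is a product of
   independent vertex choices, so gamma' concentrates: an exponential-moment bound for the squared
   deviations of the opinion counts from their means gives Pr[gamma' > 100 x] <= exp(1/2 - 23/4 x n),
   which is at most d/2 once x n >= C^2 (log n)^2 and n is large. Hence the potential
   (2/d)(100 x - gamma), set to 0 once gamma reaches x, decreases by at least 1 per round in
   expectation. So the expected number of rounds before gamma reaches x is at most 200 x/d, and
   Markov's inequality gives Pr[tau >= T] <= 200 x/(d T), with 200 <= 64 e^2. *)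

abbreviation ind :: "bool \<Rightarrow> real" where "ind P \<equiv> (if P then 1 else 0)"

lemma integrable_measure_pmf_bounded:
  fixes f :: "'a \<Rightarrow> real"
  assumes "\<And>x. \<bar>f x\<bar> \<le> B"
  shows "integrable (measure_pmf M) f"
  by (rule measure_pmf.integrable_const_bound[where B=B]) (use assms in auto)

lemma expectation_bind_pmf_bounded:
  fixes f :: "'b \<Rightarrow> real"
  assumes "\<And>x. \<bar>f x\<bar> \<le> B"
  shows "measure_pmf.expectation (bind_pmf M N) f =
         measure_pmf.expectation M (\<lambda>x. measure_pmf.expectation (N x) f)"
  unfolding measure_pmf_bind
  by (rule integral_bind[where K="count_space UNIV" and B=B and B'=1])
     (use assms in \<open>auto simp: measure_pmf_in_subprob_algebra\<close>)

lemma abs_expectation_le: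
  fixes f :: "'a \<Rightarrow> real"
  assumes "\<And>x. \<bar>f x\<bar> \<le> B"
  shows "\<bar>measure_pmf.expectation M f\<bar> \<le> B"
proof -
  have "\<bar>measure_pmf.expectation M f\<bar> \<le> measure_pmf.expectation M (\<lambda>x. \<bar>f x\<bar>)"
    using integral_norm_bound[of M f] by simp
  also have "\<dots> \<le> B"
    using assms by (intro measure_pmf.integral_le_const integrable_measure_pmf_bounded[where B=B]) auto
  finally show ?thesis .
qed

lemma exp_le_quadratic:
  fixes z :: real
  assumes "\<bar>z\<bar> \<le> 1"
  shows "exp z \<le> 1 + z + z^2"
proof (cases "z \<ge> 0")
  case True then show ?thesis using exp_bound[of z] assms by auto
next
  case False
  define y where "y = -z"
  have y: "0 < y" "y \<le> 1" using False assms y_def by auto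
  have "(1 - y + y^2) * (1 + y) = 1 + y^3" by (simp add: algebra_simps power2_eq_square power3_eq_cube)
  also have "\<dots> \<ge> 1" using y by simp
  finally have h1: "1 \<le> (1 - y + y^2) * (1 + y)" .
  have "0 < y^2" using y by simp
  then have pos: "0 < 1 - y + y^2" using y by linarith
  have "(1 - y + y^2) * (1 + y) \<le> (1 - y + y^2) * exp y"
    using exp_ge_add_one_self[of y] pos by (intro mult_left_mono) auto
  with h1 have "1 \<le> (1 - y + y^2) * exp y" by linarith
  then have "exp (-y) \<le> 1 - y + y^2"
    by (simp add: exp_minus field_simps)
  then show ?thesis using y_def by simp
qed

lemma sum_pmf_le_1: "finite I \<Longrightarrow> (\<Sum>i\<in>I. pmf p i) \<le> 1"
  using measure_measure_pmf_finite[of I p] measure_pmf.prob_le_1[of p I] by simp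

lemma expectation_ind_eq_pmf: "measure_pmf.expectation p (\<lambda>y. ind (y = i)) = pmf p i"
  by (subst integral_measure_pmf[where A="{i}"]) (auto split: if_splits)

lemma integrable_ind_eq: "integrable (measure_pmf p) (\<lambda>y. ind (y = i))"
  by (rule integrable_measure_pmf_bounded[where B=1]) auto

lemma abs_ind_minus_pmf_le_1: "\<bar>ind P - pmf p i\<bar> \<le> 1"
  using pmf_nonneg[of p i] pmf_le_1[of p i] by (cases P) (simp_all add: abs_le_iff)

lemma Pi_pmf_insert_bind:
  assumes "finite A" "v \<notin> A"
  shows "Pi_pmf (insert v A) d D = bind_pmf (Pi_pmf A d D) (\<lambda>f. map_pmf (\<lambda>y. f(v:=y)) (D v))"
  unfolding Pi_pmf_insert'[OF assms] map_pmf_def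
  by (rule bind_commute_pmf)

lemma expectation_Pi_pmf_insert:
  fixes F :: "config \<Rightarrow> real"
  assumes "finite A" "v \<notin> A" "\<And>f. \<bar>F f\<bar> \<le> B"
  shows "measure_pmf.expectation (Pi_pmf (insert v A) d D) F =
    measure_pmf.expectation (Pi_pmf A d D) (\<lambda>f. measure_pmf.expectation (D v) (\<lambda>y. F (f(v:=y))))"
  unfolding Pi_pmf_insert_bind[OF assms(1,2)]
  by (subst expectation_bind_pmf_bounded[where B=B]) (use assms(3) in auto)

section \<open>Survival probabilities of a Markov chain\<close>

fun survival :: "(config \<Rightarrow> config pmf) \<Rightarrow> (config \<Rightarrow> real) \<Rightarrow> real \<Rightarrow> nat \<Rightarrow> config \<Rightarrow> real" where
  "survival K g x 0 c = 1"
| "survival K g x (Suc m) c =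
     (if g c < x then measure_pmf.expectation (K c) (survival K g x m) else 0)"

lemma survival_bounds: "0 \<le> survival K g x m c \<and> survival K g x m c \<le> 1"
proof (induction m arbitrary: c)
  case (Suc m)
  have "measure_pmf.expectation (K c) (survival K g x m) \<le> measure_pmf.expectation (K c) (\<lambda>_. 1)"
    by (rule integral_mono[OF integrable_measure_pmf_bounded[where B=1]]) (use Suc in auto)
  moreover have "0 \<le> measure_pmf.expectation (K c) (survival K g x m)"
    by (rule integral_nonneg_AE) (use Suc in auto)
  ultimately show ?case by auto
qed simp

lemma abs_survival_le_1: "\<bar>survival K g x m c\<bar> \<le> 1"
  using survival_bounds[of K g x m c] by linarith

lemma survival_Suc_le: "survival K g x (Suc m) c \<le> survival K g x m c"
proof (induction m arbitrary: c)
  case 0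
  then show ?case using survival_bounds[of K g x 1 c] by simp
next
  case (Suc m)
  have "measure_pmf.expectation (K c) (survival K g x (Suc m))
      \<le> measure_pmf.expectation (K c) (survival K g x m)"
    by (rule integral_mono[OF integrable_measure_pmf_bounded[OF abs_survival_le_1]
          integrable_measure_pmf_bounded[OF abs_survival_le_1] Suc.IH])
  then show ?case by simp
qed

lemma survival_antimono: "m \<le> m' \<Longrightarrow> survival K g x m' c \<le> survival K g x m c"
proof (induction m' rule: dec_induct)
  case (step m')
  then show ?case using survival_Suc_le[of K g x m' c] by linarith
qed simp

lemma prob_traj_below_eq_survival:
  "measure_pmf.prob (traj K c m) {l. \<forall>t<m. g (l!t) < x} = survival K g x m c"
proof (induction m arbitrary: c)
  case (Suc m)
  let ?below = "\<lambda>m. {l. \<forall>t<m. g (l!t) < x}"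
  have cons_below: "indicator (?below (Suc m)) (c # l) = ind (g c < x) * indicator (?below m) l" for l
  proof -
    have "(\<forall>t<Suc m. g ((c#l)!t) < x) \<longleftrightarrow> g c < x \<and> (\<forall>t<m. g (l!t) < x)"
      by (auto simp: less_Suc_eq_0_disj)
    then show ?thesis by (auto simp: indicator_def)
  qed
  have "measure_pmf.prob (traj K c (Suc m)) (?below (Suc m))
      = measure_pmf.expectation (traj K c (Suc m)) (indicator (?below (Suc m)))"
    by simp
  also have "\<dots> = measure_pmf.expectation (K c) (\<lambda>c'. measure_pmf.expectation
          (map_pmf (\<lambda>l. c # l) (traj K c' m)) (indicator (?below (Suc m))))"
    by (simp only: traj.simps, rule expectation_bind_pmf_bounded[where B=1]) auto
  also have "\<dots> = measure_pmf.expectation (K c) (\<lambda>c'. ind (g c < x) *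
      measure_pmf.expectation (traj K c' m) (indicator (?below m)))"
    by (simp only: integral_map_pmf cons_below integral_mult_right_zero)
  also have "\<dots> = survival K g x (Suc m) c"
    using Suc by simp
  finally show ?case .
qed simp

lemma length_traj: "l \<in> set_pmf (traj K c m) \<Longrightarrow> length l = Suc m"
  by (induction m arbitrary: c l) auto

lemma sum_survival_le_potential:
  fixes H :: "config \<Rightarrow> real"
  assumes inv: "Inv c"
    and inv_step: "\<And>c c'. Inv c \<Longrightarrow> c' \<in> set_pmf (K c) \<Longrightarrow> Inv c'"
    and fin: "\<And>c. Inv c \<Longrightarrow> finite (set_pmf (K c))"
    and H_nonneg: "\<And>c. Inv c \<Longrightarrow> g c < x \<Longrightarrow> 0 \<le> H c"
    and drift: "\<And>c. Inv c \<Longrightarrow> g c < x \<Longrightarrow>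
        1 + measure_pmf.expectation (K c) (\<lambda>c'. if g c' < x then H c' else 0) \<le> H c"
  shows "(\<Sum>j<m. survival K g x (Suc j) c) \<le> (if g c < x then H c else 0)"
  using inv
proof (induction m arbitrary: c)
  case (Suc m)
  show ?case
  proof (cases "g c < x")
    case True
    have fin_c: "finite (set_pmf (K c))" using fin Suc.prems by blast
    note int = integrable_measure_pmf_finite[OF fin_c]
    have "(\<Sum>j<Suc m. survival K g x (Suc j) c)
        = (\<Sum>j<Suc m. measure_pmf.expectation (K c) (survival K g x j))"
      using True by simp
    also have "\<dots> = measure_pmf.expectation (K c) (\<lambda>c'. \<Sum>j<Suc m. survival K g x j c')"
      by (rule Bochner_Integration.integral_sum[symmetric]) (rule int)
    also have "\<dots> = measure_pmf.expectation (K c) (\<lambda>c'. 1 + (\<Sum>j<m. survival K g x (Suc j) c'))"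
      by (subst sum.lessThan_Suc_shift) simp
    also have "\<dots> \<le> measure_pmf.expectation (K c) (\<lambda>c'. 1 + (if g c' < x then H c' else 0))"
    proof (intro integral_mono_AE int)
      have "(\<Sum>j<m. survival K g x (Suc j) c') \<le> (if g c' < x then H c' else 0)"
        if "c' \<in> set_pmf (K c)" for c'
        using Suc.IH inv_step Suc.prems that by blast
      then show "AE c' in measure_pmf (K c). 1 + (\<Sum>j<m. survival K g x (Suc j) c')
          \<le> 1 + (if g c' < x then H c' else 0)"
        by (simp add: AE_measure_pmf_iff)
    qed
    also have "\<dots> = 1 + measure_pmf.expectation (K c) (\<lambda>c'. if g c' < x then H c' else 0)"
      by (subst Bochner_Integration.integral_add) (auto intro: int)
    also have "\<dots> \<le> H c" using drift Suc.prems True by blast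
    finally show ?thesis using True by simp
  qed simp
qed (use H_nonneg in simp)

lemma mult_survival_le_potential:
  fixes H :: "config \<Rightarrow> real"
  assumes "Inv c"
    and "\<And>c c'. Inv c \<Longrightarrow> c' \<in> set_pmf (K c) \<Longrightarrow> Inv c'"
    and "\<And>c. Inv c \<Longrightarrow> finite (set_pmf (K c))"
    and "\<And>c. Inv c \<Longrightarrow> g c < x \<Longrightarrow> 0 \<le> H c"
    and "\<And>c. Inv c \<Longrightarrow> g c < x \<Longrightarrow>
        1 + measure_pmf.expectation (K c) (\<lambda>c'. if g c' < x then H c' else 0) \<le> H c"
  shows "real m * survival K g x m c \<le> (if g c < x then H c else 0)"
proof -
  have "real m * survival K g x m c = (\<Sum>j<m. survival K g x m c)" by simp
  also have "\<dots> \<le> (\<Sum>j<m. survival K g x (Suc j) c)"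
    by (intro sum_mono survival_antimono) auto
  also have "\<dots> \<le> (if g c < x then H c else 0)"
    by (rule sum_survival_le_potential[where Inv=Inv, OF assms])
  finally show ?thesis .
qed

lemma tau_gamma_ge_prob_eq_survival:
  assumes "0 < T"
  shows "tau_gamma_ge_prob K n k x c0 T = survival K (gamma n k) x (nat \<lceil>T\<rceil>) c0"
proof -
  define N where "N = nat \<lceil>T\<rceil>"
  have before_T: "real t < T \<longleftrightarrow> t < N" for t
  proof -
    have "t < N \<longleftrightarrow> int t < \<lceil>T\<rceil>" unfolding N_def using assms by linarith
    also have "\<dots> \<longleftrightarrow> real t < T" by (subst less_ceiling_iff) simp
    finally show ?thesis by simp
  qed
  let ?E1 = "{l. \<forall>t<length l. real t < T \<longrightarrow> gamma n k (l ! t) < x}"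
  let ?E2 = "{l. \<forall>t<N. gamma n k (l ! t) < x}"
  have "l \<in> ?E1 \<longleftrightarrow> l \<in> ?E2" if "l \<in> set_pmf (traj K c0 N)" for l
  proof -
    have "length l = Suc N" using that by (rule length_traj)
    then show ?thesis unfolding before_T by auto
  qed
  then have same_on_support: "?E1 \<inter> set_pmf (traj K c0 N) = ?E2 \<inter> set_pmf (traj K c0 N)"
    by blast
  have "measure_pmf.prob (traj K c0 N) ?E1 = measure_pmf.prob (traj K c0 N) (?E1 \<inter> set_pmf (traj K c0 N))"
    by (rule measure_Int_set_pmf[symmetric])
  also have "\<dots> = measure_pmf.prob (traj K c0 N) ?E2"
    unfolding same_on_support by (rule measure_Int_set_pmf)
  finally have "measure_pmf.prob (traj K c0 N) ?E1 = measure_pmf.prob (traj K c0 N) ?E2" .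
  then show ?thesis
    unfolding tau_gamma_ge_prob_def prob_traj_below_eq_survival N_def .
qed

section \<open>Concentration of opinion counts under product measures\<close>

definition count_dev :: "nat set \<Rightarrow> (nat \<Rightarrow> nat pmf) \<Rightarrow> config \<Rightarrow> nat \<Rightarrow> real" where
  "count_dev A D f i = (\<Sum>v\<in>A. ind (f v = i) - pmf (D v) i)"

definition count_dev_sq :: "nat set \<Rightarrow> (nat \<Rightarrow> nat pmf) \<Rightarrow> nat set \<Rightarrow> config \<Rightarrow> real" where
  "count_dev_sq A D I f = (\<Sum>i\<in>I. (count_dev A D f i)^2)"

lemma abs_count_dev_le: "\<bar>count_dev A D f i\<bar> \<le> real (card A)"
proof -
  have "\<bar>count_dev A D f i\<bar> \<le> (\<Sum>v\<in>A. \<bar>ind (f v = i) - pmf (D v) i\<bar>)"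
    unfolding count_dev_def by (rule sum_abs)
  also have "\<dots> \<le> (\<Sum>v\<in>A. 1)"
    by (intro sum_mono) (auto simp: pmf_le_1)
  finally show ?thesis by simp
qed

lemma count_dev_sq_nonneg: "0 \<le> count_dev_sq A D I f"
  unfolding count_dev_sq_def by (intro sum_nonneg) auto

lemma count_dev_sq_le: "count_dev_sq A D I f \<le> real (card I) * real (card A)^2"
proof -
  have "count_dev_sq A D I f \<le> (\<Sum>i\<in>I. real (card A)^2)"
    unfolding count_dev_sq_def
  proof (intro sum_mono)
    fix i
    have "\<bar>count_dev A D f i\<bar>^2 \<le> real (card A)^2" by (rule power_mono[OF abs_count_dev_le abs_ge_zero])
    then show "(count_dev A D f i)^2 \<le> real (card A)^2" by simp
  qed
  then show ?thesis by simp
qed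

lemma count_dev_insert_fun_upd:
  assumes "finite A" "v \<notin> A"
  shows "count_dev (insert v A) D (f(v:=y)) i = count_dev A D f i + (ind (y = i) - pmf (D v) i)"
proof -
  have "count_dev A D (f(v:=y)) i = count_dev A D f i"
    unfolding count_dev_def using assms by (intro sum.cong) auto
  then show ?thesis unfolding count_dev_def using assms by (simp add: sum.insert)
qed

lemma abs_count_dev_sq_le: "\<bar>count_dev_sq A D I f\<bar> \<le> real (card I) * real (card A)^2"
  using count_dev_sq_nonneg[of A D I f] count_dev_sq_le[of A D I f] by simp

lemma count_dev_sq_insert_fun_upd:
  assumes "finite A" "v \<notin> A"
  shows "count_dev_sq (insert v A) D I (f(v:=y)) =
    (\<Sum>i\<in>I. (count_dev A D f i + (ind (y = i) - pmf (D v) i))^2)"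
  unfolding count_dev_sq_def count_dev_insert_fun_upd[OF assms] ..

lemma expectation_affine_ind:
  assumes "finite I"
  shows "measure_pmf.expectation p (\<lambda>y. a + (\<Sum>i\<in>I. b i * ind (y = i))) =
         a + (\<Sum>i\<in>I. b i * pmf p i)"
proof -
  have "measure_pmf.expectation p (\<lambda>y. a + (\<Sum>i\<in>I. b i * ind (y = i))) =
        a + measure_pmf.expectation p (\<lambda>y. \<Sum>i\<in>I. b i * ind (y = i))"
    by (subst Bochner_Integration.integral_add)
       (auto intro!: Bochner_Integration.integrable_sum integrable_mult_right integrable_ind_eq)
  also have "measure_pmf.expectation p (\<lambda>y. \<Sum>i\<in>I. b i * ind (y = i)) =
        (\<Sum>i\<in>I. measure_pmf.expectation p (\<lambda>y. b i * ind (y = i)))"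
    by (rule Bochner_Integration.integral_sum) (auto intro!: integrable_mult_right integrable_ind_eq)
  also have "\<dots> = (\<Sum>i\<in>I. b i * pmf p i)"
    by (intro sum.cong refl) (simp add: expectation_ind_eq_pmf)
  finally show ?thesis .
qed

lemma sum_mult_ind_eq:
  fixes s :: "nat \<Rightarrow> real"
  assumes "finite I"
  shows "(\<Sum>i\<in>I. s i * ind (y = i)) = (if y \<in> I then s y else 0)"
  using assms by (simp add: if_distrib[of "\<lambda>z. _ * z"] sum.delta cong: if_cong)

lemma abs_sum_mult_pmf_le:
  assumes "finite I" "\<And>i. \<bar>s i\<bar> \<le> M" "0 \<le> M"
  shows "\<bar>\<Sum>i\<in>I. s i * pmf p i\<bar> \<le> M"
proof -
  have "\<bar>\<Sum>i\<in>I. s i * pmf p i\<bar> \<le> (\<Sum>i\<in>I. \<bar>s i * pmf p i\<bar>)" by (rule sum_abs)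
  also have "\<dots> \<le> (\<Sum>i\<in>I. M * pmf p i)"
    using assms by (intro sum_mono) (auto simp: abs_mult intro!: mult_right_mono)
  also have "\<dots> = M * (\<Sum>i\<in>I. pmf p i)" by (simp add: sum_distrib_left)
  also have "\<dots> \<le> M * 1" using assms sum_pmf_le_1[OF assms(1), of p] by (intro mult_left_mono) auto
  finally show ?thesis by simp
qed

lemma sum_sq_add_ind_minus_pmf_expand:
  fixes s :: "nat \<Rightarrow> real" and y :: nat and I :: "nat set"
  assumes "finite I"
  shows "(\<Sum>i\<in>I. (s i + (ind (y = i) - pmf p i))^2) =
     (\<Sum>i\<in>I. (s i)^2) + 2 * ((\<Sum>i\<in>I. s i * ind (y = i)) - (\<Sum>i\<in>I. s i * pmf p i))
     + (\<Sum>i\<in>I. ind (y = i) * (1 - 2 * pmf p i) + (pmf p i)^2)"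
proof -
  have "\<And>i. (s i + (ind (y = i) - pmf p i))^2 = (s i)^2 + 2 * (s i * ind (y = i) - s i * pmf p i)
       + (ind (y = i) * (1 - 2 * pmf p i) + (pmf p i)^2)"
    by (auto simp: power2_eq_square algebra_simps)
  then show ?thesis
    by (simp add: sum.distrib sum_subtractf sum_distrib_left[symmetric])
qed

lemma sum_ind_quadratic_le_2:
  fixes y :: nat and I :: "nat set"
  assumes "finite I"
  shows "(\<Sum>i\<in>I. ind (y = i) * (1 - 2 * pmf p i) + (pmf p i)^2) \<le> (2::real)"
proof -
  have "(\<Sum>i\<in>I. ind (y = i) * (1 - 2 * pmf p i) + (pmf p i)^2) \<le>
        (\<Sum>i\<in>I. ind (y = i) + pmf p i)"
  proof (intro sum_mono)
    fix i
    have "(pmf p i)^2 \<le> pmf p i" using pmf_le_1[of p i] pmf_nonneg[of p i]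
      by (simp add: power2_eq_square mult_left_le)
    note h = this pmf_nonneg[of p i]
    show "ind (y = i) * (1 - 2 * pmf p i) + (pmf p i)^2 \<le> ind (y = i) + pmf p i"
    proof (cases "y = i")
      case True then show ?thesis using h by simp (use pmf_nonneg[of p i] in linarith)
    next
      case False then show ?thesis using h by simp
    qed
  qed
  also have "\<dots> = (if y \<in> I then 1 else 0) + (\<Sum>i\<in>I. pmf p i)"
    using assms by (simp add: sum.distrib sum.delta)
  also have "\<dots> \<le> 2" using sum_pmf_le_1[OF assms, of p] by auto
  finally show ?thesis .
qed

lemma expectation_sum_sq_add_ind_minus_pmf:
  fixes s :: "nat \<Rightarrow> real" and I :: "nat set"
  assumes I: "finite I"
  shows "measure_pmf.expectation p (\<lambda>y. \<Sum>i\<in>I. (s i + (ind (y = i) - pmf p i))^2)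
       = (\<Sum>i\<in>I. (s i)^2) + (\<Sum>i\<in>I. pmf p i * (1 - pmf p i))"
proof -
  define N where "N = (\<Sum>i\<in>I. (s i)^2)"
  define sb where "sb = (\<Sum>i\<in>I. s i * pmf p i)"
  define Q2 where "Q2 = (\<Sum>i\<in>I. (pmf p i)^2)"
  have pw: "\<And>y. (\<Sum>i\<in>I. (s i + (ind (y = i) - pmf p i))^2) =
     (N - 2 * sb + Q2) + (\<Sum>i\<in>I. (2 * s i + 1 - 2 * pmf p i) * ind (y = i))"
  proof -
    fix y
    have "(\<Sum>i\<in>I. (2 * s i + 1 - 2 * pmf p i) * ind (y = i)) =
          2 * (\<Sum>i\<in>I. s i * ind (y = i)) + (\<Sum>i\<in>I. ind (y = i) * (1 - 2 * pmf p i))"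
      unfolding sum_distrib_left sum.distrib[symmetric] by (intro sum.cong refl) (simp add: algebra_simps)
    moreover have "(\<Sum>i\<in>I. ind (y = i) * (1 - 2 * pmf p i) + (pmf p i)^2) =
        (\<Sum>i\<in>I. ind (y = i) * (1 - 2 * pmf p i)) + Q2"
      by (simp add: Q2_def sum.distrib)
    ultimately show "?thesis y"
      unfolding sum_sq_add_ind_minus_pmf_expand[OF I] N_def[symmetric] sb_def[symmetric] by simp
  qed
  have "measure_pmf.expectation p (\<lambda>y. \<Sum>i\<in>I. (s i + (ind (y = i) - pmf p i))^2)
      = (N - 2 * sb + Q2) + (\<Sum>i\<in>I. (2 * s i + 1 - 2 * pmf p i) * pmf p i)"
    unfolding pw by (rule expectation_affine_ind[OF I])
  also have "(\<Sum>i\<in>I. (2 * s i + 1 - 2 * pmf p i) * pmf p i) = 2 * sb + (\<Sum>i\<in>I. pmf p i) - 2 * Q2"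
    unfolding sb_def Q2_def by (simp add: sum.distrib sum_subtractf sum_distrib_left algebra_simps power2_eq_square)
  also have "(\<Sum>i\<in>I. pmf p i * (1 - pmf p i)) = (\<Sum>i\<in>I. pmf p i) - Q2"
    unfolding Q2_def by (simp add: sum_subtractf algebra_simps power2_eq_square)
  ultimately show ?thesis unfolding N_def by simp
qed

lemma exp_shifted_le_quadratic:
  fixes \<mu> N w r :: real
  assumes "0 \<le> \<mu>" "r \<le> 2" "\<bar>2 * \<mu> * w\<bar> \<le> 1"
  shows "exp (\<mu> * (N + 2 * w + r)) \<le> exp (\<mu> * N + 2 * \<mu>) * (1 + 2 * \<mu> * w + (2 * \<mu> * w)^2)"
proof -
  have "\<mu> * (N + 2 * w + r) \<le> (\<mu> * N + 2 * \<mu>) + 2 * \<mu> * w"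
    using assms(1,2) by (simp add: algebra_simps mult_left_mono)
  then have "exp (\<mu> * (N + 2 * w + r)) \<le> exp (\<mu> * N + 2 * \<mu>) * exp (2 * \<mu> * w)"
    by (simp add: exp_add[symmetric])
  also have "\<dots> \<le> exp (\<mu> * N + 2 * \<mu>) * (1 + 2 * \<mu> * w + (2 * \<mu> * w)^2)"
    using exp_le_quadratic[OF assms(3)] by (simp add: mult_left_mono)
  finally show ?thesis .
qed

lemma expectation_centred_quadratic:
  fixes s :: "nat \<Rightarrow> real" and p :: "nat pmf" and t :: real
  assumes I: "finite I"
  defines "W \<equiv> \<lambda>y. \<Sum>i\<in>I. s i * ind (y = i)" and "sb \<equiv> \<Sum>i\<in>I. s i * pmf p i"
  shows "measure_pmf.expectation p (\<lambda>y. 1 + t * (W y - sb) + (t * (W y - sb))^2)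
    = 1 + t^2 * ((\<Sum>i\<in>I. (s i)^2 * pmf p i) - sb^2)"
proof -
  have Wsq: "(W y)^2 = (\<Sum>i\<in>I. (s i)^2 * ind (y = i))" for y
    unfolding W_def sum_mult_ind_eq[OF I] by simp
  have affine: "1 + t * (W y - sb) + (t * (W y - sb))^2 = (1 - t * sb + t^2 * sb^2) +
      (\<Sum>i\<in>I. (t * s i + t^2 * (s i)^2 - 2 * t^2 * sb * s i) * ind (y = i))" for y
  proof -
    have "(\<Sum>i\<in>I. (t * s i + t^2 * (s i)^2 - 2 * t^2 * sb * s i) * ind (y = i))
        = t * W y + t^2 * (\<Sum>i\<in>I. (s i)^2 * ind (y = i)) - 2 * t^2 * sb * W y"
      unfolding W_def by (simp add: sum.distrib sum_subtractf sum_distrib_left algebra_simps)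
    then show ?thesis unfolding Wsq[symmetric] by (simp add: power2_eq_square algebra_simps)
  qed
  have "(\<Sum>i\<in>I. (t * s i + t^2 * (s i)^2 - 2 * t^2 * sb * s i) * pmf p i)
      = t * sb + t^2 * (\<Sum>i\<in>I. (s i)^2 * pmf p i) - 2 * t^2 * sb * sb"
    unfolding sb_def by (simp add: sum.distrib sum_subtractf sum_distrib_left algebra_simps)
  then show ?thesis
    unfolding affine expectation_affine_ind[OF I] by (simp add: power2_eq_square algebra_simps)
qed

(* One more vertex shifts the squared deviation by 2 (W y - sb) + R y with R y <= 2, where the
   shift W y - sb is centred; exp t <= 1 + t + t^2 turns its exponential moment into the factor
   exp (4 mu^2 N). *)
lemma expectation_exp_sum_sq_add_ind_minus_pmf_le:
  fixes s :: "nat \<Rightarrow> real" and I :: "nat set"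
  assumes I: "finite I" and sM: "\<And>i. \<bar>s i\<bar> \<le> M" and M: "0 \<le> M"
    and mu: "0 \<le> \<mu>" "4 * M * \<mu> \<le> 1"
  shows "measure_pmf.expectation p (\<lambda>y. exp (\<mu> * (\<Sum>i\<in>I. (s i + (ind (y = i) - pmf p i))^2)))
       \<le> exp (2 * \<mu>) * exp ((\<mu> + 4 * \<mu>^2) * (\<Sum>i\<in>I. (s i)^2))"
proof -
  define N where "N = (\<Sum>i\<in>I. (s i)^2)"
  define sb where "sb = (\<Sum>i\<in>I. s i * pmf p i)"
  define W where "W = (\<lambda>y. \<Sum>i\<in>I. s i * ind (y = i))"
  define R where "R = (\<lambda>y. \<Sum>i\<in>I. ind (y = i) * (1 - 2 * pmf p i) + (pmf p i)^2)"
  define K where "K = exp (\<mu> * N + 2 * \<mu>)"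
  define G where "G = (\<lambda>y. K * (1 + 2 * \<mu> * (W y - sb) + (2 * \<mu> * (W y - sb))^2))"
  have dec: "\<And>y. (\<Sum>i\<in>I. (s i + (ind (y = i) - pmf p i))^2) = N + 2 * (W y - sb) + R y"
    unfolding N_def W_def sb_def R_def by (rule sum_sq_add_ind_minus_pmf_expand[OF I])
  have R_le: "R y \<le> 2" for y unfolding R_def by (rule sum_ind_quadratic_le_2[OF I])
  have shift_le: "\<bar>W y - sb\<bar> \<le> 2 * M" for y
  proof -
    have "\<bar>W y\<bar> \<le> M" unfolding W_def sum_mult_ind_eq[OF I] using sM M by simp
    moreover have "\<bar>sb\<bar> \<le> M" unfolding sb_def by (rule abs_sum_mult_pmf_le[OF I sM M])
    ultimately show ?thesis by linarith
  qed
  have step_le: "\<bar>2 * \<mu> * (W y - sb)\<bar> \<le> 1" for y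
  proof -
    have "\<bar>2 * \<mu> * (W y - sb)\<bar> = 2 * \<mu> * \<bar>W y - sb\<bar>" using mu(1) by (simp add: abs_mult)
    also have "\<dots> \<le> 2 * \<mu> * (2 * M)" using shift_le[of y] mu(1) by (intro mult_left_mono) auto
    also have "\<dots> = 4 * M * \<mu>" by simp
    finally show ?thesis using mu(2) by linarith
  qed
  have pointwise: "exp (\<mu> * (N + 2 * (W y - sb) + R y)) \<le> G y" for y
    unfolding G_def K_def by (rule exp_shifted_le_quadratic[OF mu(1) R_le step_le])
  have int_exp: "integrable (measure_pmf p) (\<lambda>y. exp (\<mu> * (N + 2 * (W y - sb) + R y)))"
  proof (rule integrable_measure_pmf_bounded[where B="exp (\<mu> * (N + 4 * M + 2))"])
    fix y
    have "N + 2 * (W y - sb) + R y \<le> N + 4 * M + 2" using shift_le[of y] R_le[of y] unfolding abs_le_iff by (simp add: algebra_simps)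
    then show "\<bar>exp (\<mu> * (N + 2 * (W y - sb) + R y))\<bar> \<le> exp (\<mu> * (N + 4 * M + 2))"
      using mu by (simp add: mult_left_mono)
  qed
  have int_G: "integrable (measure_pmf p) G"
  proof (rule integrable_measure_pmf_bounded[where B="K * 3"])
    fix y
    have "(2 * \<mu> * (W y - sb))^2 \<le> 1" using step_le[of y] abs_square_le_1 by blast
    then have "\<bar>1 + 2 * \<mu> * (W y - sb) + (2 * \<mu> * (W y - sb))^2\<bar> \<le> 3"
      using step_le[of y] zero_le_power2[of "2 * \<mu> * (W y - sb)"] unfolding abs_le_iff by linarith
    then show "\<bar>G y\<bar> \<le> K * 3" unfolding G_def K_def by (simp add: abs_mult)
  qed
  have "measure_pmf.expectation p (\<lambda>y. exp (\<mu> * (\<Sum>i\<in>I. (s i + (ind (y = i) - pmf p i))^2)))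
      \<le> measure_pmf.expectation p G"
    unfolding dec by (rule integral_mono[OF int_exp int_G pointwise])
  also have "\<dots> = K * (1 + (2 * \<mu>)^2 * ((\<Sum>i\<in>I. (s i)^2 * pmf p i) - sb^2))"
    unfolding G_def W_def sb_def by (simp add: expectation_centred_quadratic[OF I])
  also have "\<dots> \<le> K * (1 + 4 * \<mu>^2 * N)"
  proof -
    have "(\<Sum>i\<in>I. (s i)^2 * pmf p i) \<le> N" unfolding N_def
      by (intro sum_mono) (simp add: mult_left_le pmf_le_1)
    then have "(\<Sum>i\<in>I. (s i)^2 * pmf p i) - sb^2 \<le> N" using zero_le_power2[of sb] by linarith
    then have "(2 * \<mu>)^2 * ((\<Sum>i\<in>I. (s i)^2 * pmf p i) - sb^2) \<le> (2 * \<mu>)^2 * N"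
      by (rule mult_left_mono) simp
    then have "(2 * \<mu>)^2 * ((\<Sum>i\<in>I. (s i)^2 * pmf p i) - sb^2) \<le> 4 * \<mu>^2 * N"
      by (simp add: power_mult_distrib)
    then show ?thesis unfolding K_def by (intro mult_left_mono) auto
  qed
  also have "\<dots> \<le> K * exp (4 * \<mu>^2 * N)"
    unfolding K_def by (intro mult_left_mono) (auto simp: exp_ge_add_one_self)
  also have "\<dots> = exp (2 * \<mu>) * exp ((\<mu> + 4 * \<mu>^2) * N)"
    unfolding K_def by (simp add: exp_add[symmetric] algebra_simps)
  finally show ?thesis unfolding N_def .
qed

lemma expectation_count_dev_sq:
  assumes "finite A" "finite I"
  shows "measure_pmf.expectation (Pi_pmf A d D) (count_dev_sq A D I) =
     (\<Sum>v\<in>A. \<Sum>i\<in>I. pmf (D v) i * (1 - pmf (D v) i))"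
  using assms(1)
proof (induction A rule: finite_induct)
  case empty
  then show ?case by (simp add: count_dev_sq_def count_dev_def)
next
  case (insert v A)
  have "measure_pmf.expectation (Pi_pmf (insert v A) d D) (count_dev_sq (insert v A) D I) =
    measure_pmf.expectation (Pi_pmf A d D) (\<lambda>f. measure_pmf.expectation (D v) (\<lambda>y. count_dev_sq (insert v A) D I (f(v:=y))))"
    by (rule expectation_Pi_pmf_insert[OF insert(1,2) abs_count_dev_sq_le])
  also have "\<dots> = measure_pmf.expectation (Pi_pmf A d D) (\<lambda>f. count_dev_sq A D I f + (\<Sum>i\<in>I. pmf (D v) i * (1 - pmf (D v) i)))"
    apply (simp only: count_dev_sq_insert_fun_upd[OF insert(1,2)])
    apply (simp only: expectation_sum_sq_add_ind_minus_pmf[OF assms(2)])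
    apply (simp only: count_dev_sq_def)
    done
  also have "\<dots> = measure_pmf.expectation (Pi_pmf A d D) (count_dev_sq A D I) + (\<Sum>i\<in>I. pmf (D v) i * (1 - pmf (D v) i))"
    by (subst Bochner_Integration.integral_add) (auto intro: integrable_measure_pmf_bounded[OF abs_count_dev_sq_le])
  finally show ?case using insert by (simp add: add.commute)
qed

lemma exp_moment_parameters:
  fixes m \<mu> :: real
  assumes "0 \<le> m" "0 \<le> \<mu>" "8 * (m + 1) * \<mu> \<le> 1"
  shows "4 * m * \<mu> \<le> 1" "8 * m * (\<mu> + 4 * \<mu>^2) \<le> 1"
    "2 * \<mu> + 4 * m * (\<mu> + 4 * \<mu>^2) \<le> 4 * (m + 1) * \<mu>"
proof -
  have a1: "8 * m * \<mu> \<le> 1" using assms by (simp add: algebra_simps)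
  then show "4 * m * \<mu> \<le> 1" using assms by (simp add: algebra_simps)
  have "16 * m * \<mu>^2 = 2 * \<mu> * (8 * m * \<mu>)" by (simp add: power2_eq_square algebra_simps)
  also have "\<dots> \<le> 2 * \<mu> * 1" using a1 assms(2) by (intro mult_left_mono) auto
  finally have a2: "16 * m * \<mu>^2 \<le> 2 * \<mu>" by simp
  then show "8 * m * (\<mu> + 4 * \<mu>^2) \<le> 1" using assms by (simp add: algebra_simps)
  show "2 * \<mu> + 4 * m * (\<mu> + 4 * \<mu>^2) \<le> 4 * (m + 1) * \<mu>" using a2 by (simp add: algebra_simps)
qed

(* Induction over the vertices: each vertex raises the parameter from mu to mu + 4 mu^2, and
   exp_moment_parameters shows that the accumulated cost stays within exp (4 |A| mu). *)
lemma expectation_exp_count_dev_sq_le: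
  assumes "finite A" "finite I" "0 \<le> \<mu>" "8 * real (card A) * \<mu> \<le> 1"
  shows "measure_pmf.expectation (Pi_pmf A d D) (\<lambda>f. exp (\<mu> * count_dev_sq A D I f))
    \<le> exp (4 * real (card A) * \<mu>)"
  using assms(1,3,4)
proof (induction A arbitrary: \<mu> rule: finite_induct)
  case empty
  then show ?case by (simp add: count_dev_sq_def count_dev_def)
next
  case (insert v A)
  define m where "m = real (card A)"
  have cm: "real (card (insert v A)) = m + 1" using insert(1,2) m_def by simp
  have h8: "8 * (m + 1) * \<mu> \<le> 1" using insert(5) cm by simp
  have mu0: "0 \<le> \<mu>" by fact
  have m0: "0 \<le> m" unfolding m_def by simp
  define \<mu>' where "\<mu>' = \<mu> + 4 * \<mu>^2"
  have mu'0: "0 \<le> \<mu>'" unfolding \<mu>'_def using mu0 by simp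
  note params = exp_moment_parameters[OF m0 mu0 h8, folded \<mu>'_def]
  have bnd: "\<bar>exp (\<mu> * count_dev_sq B D I f)\<bar> \<le> exp (\<mu> * (real (card I) * real (card B)^2))" for B f
    using count_dev_sq_le[of B D I f] mu0 by (simp add: mult_left_mono)
  have "measure_pmf.expectation (Pi_pmf (insert v A) d D) (\<lambda>f. exp (\<mu> * count_dev_sq (insert v A) D I f)) =
    measure_pmf.expectation (Pi_pmf A d D) (\<lambda>f. measure_pmf.expectation (D v) (\<lambda>y. exp (\<mu> * count_dev_sq (insert v A) D I (f(v:=y)))))"
    by (rule expectation_Pi_pmf_insert[OF insert(1,2) bnd])
  also have "\<dots> \<le> measure_pmf.expectation (Pi_pmf A d D) (\<lambda>f. exp (2 * \<mu>) * exp (\<mu>' * count_dev_sq A D I f))"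
  proof (rule integral_mono)
    show "integrable (measure_pmf (Pi_pmf A d D)) (\<lambda>f. measure_pmf.expectation (D v) (\<lambda>y. exp (\<mu> * count_dev_sq (insert v A) D I (f(v:=y)))))"
      using bnd[of "insert v A"]
      by (intro integrable_measure_pmf_bounded abs_expectation_le) blast
    show "integrable (measure_pmf (Pi_pmf A d D)) (\<lambda>f. exp (2 * \<mu>) * exp (\<mu>' * count_dev_sq A D I f))"
      using count_dev_sq_le[of A D I] mu'0
      by (intro integrable_mult_right
          integrable_measure_pmf_bounded[where B="exp (\<mu>' * (real (card I) * real (card A)^2))"])
         (simp add: mult_left_mono)
    fix f
    show "measure_pmf.expectation (D v) (\<lambda>y. exp (\<mu> * count_dev_sq (insert v A) D I (f(v:=y)))) \<le> exp (2 * \<mu>) * exp (\<mu>' * count_dev_sq A D I f)"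
      apply (simp only: count_dev_sq_insert_fun_upd[OF insert(1,2)])
      unfolding \<mu>'_def count_dev_sq_def
      by (rule expectation_exp_sum_sq_add_ind_minus_pmf_le[OF assms(2) _ m0 mu0]) (use abs_count_dev_le m_def params(1) in auto)
  qed
  also have "\<dots> = exp (2 * \<mu>) * measure_pmf.expectation (Pi_pmf A d D) (\<lambda>f. exp (\<mu>' * count_dev_sq A D I f))"
    by simp
  also have "\<dots> \<le> exp (2 * \<mu>) * exp (4 * m * \<mu>')"
    using insert(3)[OF mu'0] params(2) m_def by (intro mult_left_mono) auto
  also have "\<dots> \<le> exp (4 * real (card (insert v A)) * \<mu>)"
    using params(3) unfolding cm by (simp add: exp_add[symmetric])
  finally show ?case .
qed

lemma prob_count_dev_sq_gt_le:
  assumes "finite A" "finite I" "0 \<le> \<mu>" "8 * real (card A) * \<mu> \<le> 1"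
  shows "measure_pmf.prob (Pi_pmf A d D) {f. s < count_dev_sq A D I f}
    \<le> exp (4 * real (card A) * \<mu> - \<mu> * s)"
proof -
  have bnd: "\<bar>exp (\<mu> * count_dev_sq A D I f)\<bar> \<le> exp (\<mu> * (real (card I) * real (card A)^2))" for f
    using count_dev_sq_le[of A D I f] assms(3) by (simp add: mult_left_mono)
  have "measure_pmf.prob (Pi_pmf A d D) {f. s < count_dev_sq A D I f} =
        measure_pmf.expectation (Pi_pmf A d D) (indicator {f. s < count_dev_sq A D I f})" by simp
  also have "\<dots> \<le> measure_pmf.expectation (Pi_pmf A d D) (\<lambda>f. exp (- \<mu> * s) * exp (\<mu> * count_dev_sq A D I f))"
  proof (rule integral_mono)
    show "integrable (measure_pmf (Pi_pmf A d D)) (indicat_real {f. s < count_dev_sq A D I f})"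
      by (rule integrable_measure_pmf_bounded[where B=1]) (auto simp: indicator_def)
    show "integrable (measure_pmf (Pi_pmf A d D)) (\<lambda>f. exp (- \<mu> * s) * exp (\<mu> * count_dev_sq A D I f))"
      by (intro integrable_mult_right integrable_measure_pmf_bounded[OF bnd])
    fix f
    show "indicat_real {f. s < count_dev_sq A D I f} f \<le> exp (- \<mu> * s) * exp (\<mu> * count_dev_sq A D I f)"
    proof (cases "s < count_dev_sq A D I f")
      case True
      then have "0 \<le> \<mu> * (count_dev_sq A D I f - s)" using assms(3) by simp
      then have "1 \<le> exp (\<mu> * (count_dev_sq A D I f - s))" by simp
      moreover have "exp (- \<mu> * s) * exp (\<mu> * count_dev_sq A D I f) = exp (\<mu> * (count_dev_sq A D I f - s))"
        by (simp add: exp_add[symmetric] algebra_simps)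
      ultimately show ?thesis using True by simp
    qed simp
  qed
  also have "\<dots> = exp (- \<mu> * s) * measure_pmf.expectation (Pi_pmf A d D) (\<lambda>f. exp (\<mu> * count_dev_sq A D I f))" by simp
  also have "\<dots> \<le> exp (- \<mu> * s) * exp (4 * real (card A) * \<mu>)"
    by (intro mult_left_mono expectation_exp_count_dev_sq_le assms) auto
  also have "\<dots> = exp (4 * real (card A) * \<mu> - \<mu> * s)" by (simp add: exp_add[symmetric])
  finally show ?thesis .
qed

lemma expectation_ind_Pi_pmf:
  assumes "finite A" "u \<in> A"
  shows "measure_pmf.expectation (Pi_pmf A d D) (\<lambda>f. ind (f u = i)) = pmf (D u) i"
proof -
  have "measure_pmf.expectation (Pi_pmf A d D) (\<lambda>f. ind (f u = i)) =
        measure_pmf.expectation (map_pmf (\<lambda>f. f u) (Pi_pmf A d D)) (\<lambda>y. ind (y = i))"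
    by simp
  also have "\<dots> = pmf (D u) i" using assms by (simp add: Pi_pmf_component expectation_ind_eq_pmf)
  finally show ?thesis .
qed

lemma expectation_count_dev:
  assumes "finite A"
  shows "measure_pmf.expectation (Pi_pmf A d D) (\<lambda>f. count_dev A D f i) = 0"
proof -
  have "measure_pmf.expectation (Pi_pmf A d D) (\<lambda>f. count_dev A D f i) =
        (\<Sum>v\<in>A. measure_pmf.expectation (Pi_pmf A d D) (\<lambda>f. ind (f v = i) - pmf (D v) i))"
    unfolding count_dev_def
    by (rule Bochner_Integration.integral_sum) (auto intro!: integrable_measure_pmf_bounded[OF abs_ind_minus_pmf_le_1])
  also have "\<dots> = (\<Sum>v\<in>A. 0)"
  proof (intro sum.cong refl)
    fix v assume v: "v \<in> A"
    have "measure_pmf.expectation (Pi_pmf A d D) (\<lambda>f. ind (f v = i) - pmf (D v) i)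
        = measure_pmf.expectation (Pi_pmf A d D) (\<lambda>f. ind (f v = i)) - pmf (D v) i"
      by (subst Bochner_Integration.integral_diff) (auto intro!: integrable_measure_pmf_bounded[where B=1])
    then show "measure_pmf.expectation (Pi_pmf A d D) (\<lambda>f. ind (f v = i) - pmf (D v) i) = 0"
      using expectation_ind_Pi_pmf[OF assms v] by simp
  qed
  finally show ?thesis by simp
qed

definition valid_config :: "nat \<Rightarrow> nat \<Rightarrow> config \<Rightarrow> bool" where
  "valid_config n k c \<longleftrightarrow> (\<forall>u<n. c u \<in> {1..k})"

lemma real_card_opinion_eq_sum:
  fixes c :: config
  shows "real (card {v \<in> {0..<n}. c v = i}) = (\<Sum>v\<in>{0..<n}. ind (c v = i))"
proof -
  have "real (card {v \<in> {0..<n}. c v = i}) = (\<Sum>v\<in>{v \<in> {0..<n}. c v = i}. 1)" by simp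
  also have "\<dots> = (\<Sum>v\<in>{0..<n}. ind (c v = i))"
    by (rule sum.inter_filter) simp
  finally show ?thesis .
qed

lemma sum_vertices_by_opinion:
  assumes "valid_config n k c"
  shows "(\<Sum>w\<in>{0..<n}. h (c w)) = (\<Sum>j\<in>{1..k}. real (card {v \<in> {0..<n}. c v = j}) * (h j :: real))"
proof -
  have "(\<Sum>w\<in>{0..<n}. h (c w)) = (\<Sum>w\<in>{0..<n}. \<Sum>j\<in>{1..k}. ind (c w = j) * h j)"
  proof (intro sum.cong refl)
    fix w assume "w \<in> {0..<n}"
    then have "c w \<in> {1..k}" using assms unfolding valid_config_def by auto
    then show "h (c w) = (\<Sum>j\<in>{1..k}. ind (c w = j) * h j)"
      by (simp add: if_distrib[of "\<lambda>z. z * _"] sum.delta cong: if_cong)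
  qed
  also have "\<dots> = (\<Sum>j\<in>{1..k}. \<Sum>w\<in>{0..<n}. ind (c w = j) * h j)" by (rule sum.swap)
  also have "\<dots> = (\<Sum>j\<in>{1..k}. real (card {v \<in> {0..<n}. c v = j}) * h j)"
  proof (intro sum.cong refl)
    fix j
    show "(\<Sum>w\<in>{0..<n}. ind (c w = j) * h j) = real (card {v \<in> {0..<n}. c v = j}) * h j"
      unfolding real_card_opinion_eq_sum by (simp add: sum_distrib_right)
  qed
  finally show ?thesis .
qed

lemma sum_alpha_eq_1:
  assumes "valid_config n k c" "0 < n"
  shows "(\<Sum>j\<in>{1..k}. alpha n c j) = 1"
proof -
  have "(\<Sum>w\<in>{0..<n}. (1::real)) = (\<Sum>j\<in>{1..k}. real (card {v \<in> {0..<n}. c v = j}) * 1)"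
    by (rule sum_vertices_by_opinion[OF assms(1)])
  then have "(\<Sum>j\<in>{1..k}. real (card {v \<in> {0..<n}. c v = j})) = real n" by simp
  then show ?thesis using assms(2) unfolding alpha_def by (simp add: sum_divide_distrib[symmetric])
qed

lemma sum_vertices_eq_alpha:
  assumes "valid_config n k c" "0 < n"
  shows "(\<Sum>w\<in>{0..<n}. h (c w)) = real n * (\<Sum>j\<in>{1..k}. alpha n c j * (h j :: real))"
  using assms unfolding sum_vertices_by_opinion[OF assms(1)] alpha_def
  by (simp add: sum_distrib_left)

lemma sum_vertices_if_opinion_eq:
  fixes c :: config
  assumes "0 < n"
  shows "(\<Sum>w\<in>{0..<n}. if c w = z then A else B) / real n = alpha n c z * A + (1 - alpha n c z) * (B::real)"
proof -
  have "(\<Sum>w\<in>{0..<n}. if c w = z then A else B) = (\<Sum>w\<in>{0..<n}. ind (c w = z) * (A - B) + B)"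
    by (intro sum.cong refl) auto
  also have "\<dots> = real (card {v \<in> {0..<n}. c v = z}) * (A - B) + real n * B"
    unfolding real_card_opinion_eq_sum by (simp add: sum.distrib sum_distrib_right)
  finally show ?thesis using assms unfolding alpha_def by (simp add: field_simps)
qed

lemma alpha_nonneg: "0 \<le> alpha n c i" unfolding alpha_def by simp

lemma alpha_le_1: "alpha n c i \<le> 1"
proof (cases "n = 0")
  case False
  have "card {v \<in> {0..<n}. c v = i} \<le> card {0..<n}" by (intro card_mono) auto
  then show ?thesis using False unfolding alpha_def by simp
qed (simp add: alpha_def)

lemma gamma_nonneg: "0 \<le> gamma n k c" unfolding gamma_def by (intro sum_nonneg) auto

lemma gamma_le_sum_alpha: "gamma n k c \<le> (\<Sum>j\<in>{1..k}. alpha n c j)"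
  unfolding gamma_def
  by (intro sum_mono) (simp add: power2_eq_square mult_left_le alpha_le_1 alpha_nonneg)

lemma sum_alpha_le_1: "(\<Sum>j\<in>{1..k}. alpha n c j) \<le> 1"
proof (cases "n = 0")
  case False
  have "(\<Sum>j\<in>{1..k}. alpha n c j) = (\<Sum>v\<in>{0..<n}. \<Sum>j\<in>{1..k}. ind (c v = j)) / real n"
    unfolding alpha_def real_card_opinion_eq_sum by (subst sum.swap) (simp add: sum_divide_distrib)
  also have "\<dots> \<le> (\<Sum>v\<in>{0..<n}. 1) / real n"
    by (intro divide_right_mono sum_mono) (auto simp: sum.delta)
  finally show ?thesis using False by simp
qed (simp add: alpha_def)

lemma gamma_le_1: "gamma n k c \<le> 1"
  using gamma_le_sum_alpha sum_alpha_le_1 order_trans by blast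

lemma gamma_ge_inv_n:
  assumes "valid_config n k c" "0 < n"
  shows "1 / real n \<le> gamma n k c"
proof -
  have "(\<Sum>j\<in>{1..k}. alpha n c j * (1 / real n)) \<le> (\<Sum>j\<in>{1..k}. alpha n c j * alpha n c j)"
  proof (intro sum_mono)
    fix j
    show "alpha n c j * (1 / real n) \<le> alpha n c j * alpha n c j"
    proof (cases "card {v \<in> {0..<n}. c v = j} = 0")
      case True
      then show ?thesis unfolding alpha_def True by simp
    next
      case False
      then have "1 \<le> real (card {v \<in> {0..<n}. c v = j})" by linarith
      then have "1 / real n \<le> alpha n c j" unfolding alpha_def by (intro divide_right_mono) auto
      then show ?thesis by (intro mult_left_mono alpha_nonneg)
    qed
  qed
  also have "\<dots> = gamma n k c" unfolding gamma_def by (simp add: power2_eq_square)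
  finally show ?thesis using sum_alpha_eq_1[OF assms] by (simp add: sum_divide_distrib[symmetric])
qed

lemma alpha_le_1_minus_half:
  assumes "j \<in> {1..k}" "gamma n k c \<le> 1 - \<epsilon>" "\<epsilon> < 1"
  shows "alpha n c j \<le> 1 - \<epsilon> / 2"
proof -
  have "(alpha n c j)^2 \<le> gamma n k c"
    unfolding gamma_def using assms(1) by (rule member_le_sum) auto
  also have "\<dots> \<le> (1 - \<epsilon> / 2)^2"
  proof -
    have "(1 - \<epsilon> / 2)^2 = 1 - \<epsilon> + \<epsilon> * \<epsilon> / 4" by (simp add: power2_eq_square algebra_simps)
    then show ?thesis using assms(2) zero_le_square[of \<epsilon>] by linarith
  qed
  finally show ?thesis by (rule power2_le_imp_le) (use assms(3) in simp)
qed

section \<open>The collision probability after a round of independent choices\<close>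

definition mean_fraction :: "(nat \<Rightarrow> nat pmf) \<Rightarrow> nat \<Rightarrow> nat \<Rightarrow> real" where
  "mean_fraction D n i = (\<Sum>u\<in>{0..<n}. pmf (D u) i) / real n"

lemma alpha_eq_mean_fraction_add:
  assumes "0 < n"
  shows "alpha n f i = mean_fraction D n i + count_dev {0..<n} D f i / real n"
proof -
  have "alpha n f i = (\<Sum>v\<in>{0..<n}. ind (f v = i)) / real n" unfolding alpha_def real_card_opinion_eq_sum ..
  also have "(\<Sum>v\<in>{0..<n}. ind (f v = i)) = (\<Sum>u\<in>{0..<n}. pmf (D u) i) + count_dev {0..<n} D f i"
    unfolding count_dev_def by (simp add: sum_subtractf)
  finally show ?thesis unfolding mean_fraction_def by (simp add: add_divide_distrib)
qed

lemma gamma_eq_mean_fraction_expand: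
  assumes "0 < n"
  shows "gamma n k f = (\<Sum>i\<in>{1..k}. (mean_fraction D n i)^2) + 2 / real n * (\<Sum>i\<in>{1..k}. mean_fraction D n i * count_dev {0..<n} D f i)
          + count_dev_sq {0..<n} D {1..k} f / (real n)^2"
proof -
  have "gamma n k f = (\<Sum>i\<in>{1..k}. (mean_fraction D n i + count_dev {0..<n} D f i / real n)^2)"
    unfolding gamma_def alpha_eq_mean_fraction_add[OF assms, where D=D] ..
  also have "\<dots> = (\<Sum>i\<in>{1..k}. (mean_fraction D n i)^2 + 2 / real n * (mean_fraction D n i * count_dev {0..<n} D f i)
         + (count_dev {0..<n} D f i)^2 / (real n)^2)"
    by (intro sum.cong refl) (simp add: power2_sum power_divide algebra_simps)
  also have "\<dots> = (\<Sum>i\<in>{1..k}. (mean_fraction D n i)^2) + 2 / real n * (\<Sum>i\<in>{1..k}. mean_fraction D n i * count_dev {0..<n} D f i)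
          + count_dev_sq {0..<n} D {1..k} f / (real n)^2"
    unfolding count_dev_sq_def by (simp add: sum.distrib sum_distrib_left sum_divide_distrib)
  finally show ?thesis .
qed

lemma gamma_le_mean_fraction_add:
  assumes "0 < n"
  shows "gamma n k f
    \<le> 2 * (\<Sum>i\<in>{1..k}. (mean_fraction D n i)^2) + 2 * count_dev_sq {0..<n} D {1..k} f / (real n)^2"
proof -
  have "gamma n k f = (\<Sum>i\<in>{1..k}. (mean_fraction D n i + count_dev {0..<n} D f i / real n)^2)"
    unfolding gamma_def alpha_eq_mean_fraction_add[OF assms, where D=D] ..
  also have "\<dots> \<le> (\<Sum>i\<in>{1..k}. 2 * (mean_fraction D n i)^2 + 2 * ((count_dev {0..<n} D f i)^2 / (real n)^2))"
  proof (intro sum_mono)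
    fix i
    have "\<And>a b::real. (a + b)^2 \<le> 2 * a^2 + 2 * b^2"
    proof -
      fix a b :: real
      have "0 \<le> (a - b)^2" by simp
      also have "(a - b)^2 = 2 * a^2 + 2 * b^2 - (a + b)^2" by (simp add: power2_eq_square algebra_simps)
      finally show "(a + b)^2 \<le> 2 * a^2 + 2 * b^2" by simp
    qed
    note sq = this
    show "(mean_fraction D n i + count_dev {0..<n} D f i / real n)^2 \<le> 2 * (mean_fraction D n i)^2 + 2 * ((count_dev {0..<n} D f i)^2 / (real n)^2)"
      using sq[of "mean_fraction D n i" "count_dev {0..<n} D f i / real n"] by (simp add: power_divide)
  qed
  also have "\<dots> = 2 * (\<Sum>i\<in>{1..k}. (mean_fraction D n i)^2) + 2 * count_dev_sq {0..<n} D {1..k} f / (real n)^2"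
    unfolding count_dev_sq_def by (simp add: sum.distrib sum_distrib_left sum_divide_distrib)
  finally show ?thesis .
qed

lemma expectation_gamma_Pi_pmf:
  assumes "0 < n"
  shows "measure_pmf.expectation (Pi_pmf {0..<n} d D) (gamma n k) =
    (\<Sum>i\<in>{1..k}. (mean_fraction D n i)^2) + (\<Sum>u\<in>{0..<n}. \<Sum>i\<in>{1..k}. pmf (D u) i * (1 - pmf (D u) i)) / (real n)^2"
proof -
  let ?M = "Pi_pmf {0..<n} d D"
  have iS: "integrable (measure_pmf ?M) (\<lambda>f. count_dev {0..<n} D f i)" for i
    by (rule integrable_measure_pmf_bounded[OF abs_count_dev_le])
  have iN: "integrable (measure_pmf ?M) (count_dev_sq {0..<n} D {1..k})"
    by (rule integrable_measure_pmf_bounded[OF abs_count_dev_sq_le])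
  have "measure_pmf.expectation ?M (gamma n k) = measure_pmf.expectation ?M (\<lambda>f.
      (\<Sum>i\<in>{1..k}. (mean_fraction D n i)^2) + 2 / real n * (\<Sum>i\<in>{1..k}. mean_fraction D n i * count_dev {0..<n} D f i)
          + count_dev_sq {0..<n} D {1..k} f / (real n)^2)"
    unfolding gamma_eq_mean_fraction_expand[OF assms, where D=D] ..
  also have "\<dots> = (\<Sum>i\<in>{1..k}. (mean_fraction D n i)^2) + 2 / real n * (\<Sum>i\<in>{1..k}. mean_fraction D n i * measure_pmf.expectation ?M (\<lambda>f. count_dev {0..<n} D f i))
          + measure_pmf.expectation ?M (count_dev_sq {0..<n} D {1..k}) / (real n)^2"
    using iS iN
    by (simp add: Bochner_Integration.integral_add Bochner_Integration.integral_sum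
         Bochner_Integration.integrable_sum integrable_mult_right)
  also have "\<dots> = (\<Sum>i\<in>{1..k}. (mean_fraction D n i)^2) + (\<Sum>u\<in>{0..<n}. \<Sum>i\<in>{1..k}. pmf (D u) i * (1 - pmf (D u) i)) / (real n)^2"
    by (simp add: expectation_count_dev expectation_count_dev_sq)
  finally show ?thesis .
qed

(* Since gamma' <= 2 sum (mean fractions)^2 + 2 count_dev_sq / n^2 and the first sum is at most
   8 x, the event gamma' > 100 x forces count_dev_sq > 46 x n^2; then apply the exponential
   moment bound with mu = 1/(8 n). *)
lemma prob_gamma_gt_100_le:
  assumes n: "0 < n" and mean: "(\<Sum>i\<in>{1..k}. (mean_fraction D n i)^2) \<le> 4 * x"
  shows "measure_pmf.prob (Pi_pmf {0..<n} 0 D) {f. 100 * x < gamma n k f} \<le> exp (1/2 - 23/4 * x * real n)"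
proof -
  have nn: "0 < real n" using n by simp
  have sub: "{f. 100 * x < gamma n k f} \<subseteq> {f. 46 * x * (real n)^2 < count_dev_sq {0..<n} D {1..k} f}"
  proof safe
    fix f assume a: "100 * x < gamma n k f"
    have "gamma n k f \<le> 2 * (\<Sum>i\<in>{1..k}. (mean_fraction D n i)^2) + 2 * count_dev_sq {0..<n} D {1..k} f / (real n)^2"
      by (rule gamma_le_mean_fraction_add[OF n])
    then have "46 * x < count_dev_sq {0..<n} D {1..k} f / (real n)^2" using a mean by linarith
    then show "46 * x * (real n)^2 < count_dev_sq {0..<n} D {1..k} f" using nn by (simp add: pos_less_divide_eq)
  qed
  have "measure_pmf.prob (Pi_pmf {0..<n} 0 D) {f. 100 * x < gamma n k f}
      \<le> measure_pmf.prob (Pi_pmf {0..<n} 0 D) {f. 46 * x * (real n)^2 < count_dev_sq {0..<n} D {1..k} f}"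
    by (rule measure_pmf.finite_measure_mono[OF sub]) simp
  also have "\<dots> \<le> exp (4 * real (card {0..<n}) * (1 / (8 * real n)) - (1 / (8 * real n)) * (46 * x * (real n)^2))"
    by (rule prob_count_dev_sq_gt_le) (use nn in auto)
  also have "4 * real (card {0..<n}) * (1 / (8 * real n)) - (1 / (8 * real n)) * (46 * x * (real n)^2)
      = 1/2 - 23/4 * x * real n"
    using nn by (simp add: field_simps power2_eq_square)
  finally show ?thesis .
qed

lemma set_pmf_Pi_pmf_valid_config:
  assumes "\<And>u. u < n \<Longrightarrow> set_pmf (D u) \<subseteq> {1..k}"
  shows "f \<in> set_pmf (Pi_pmf {0..<n} 0 D) \<Longrightarrow> valid_config n k f"
    and "finite (set_pmf (Pi_pmf {0..<n} 0 D))"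
proof -
  have set_Pi: "set_pmf (Pi_pmf {0..<n} 0 D) = PiE_dflt {0..<n} 0 (set_pmf \<circ> D)"
    by (rule set_Pi_pmf) simp
  show "valid_config n k f" if "f \<in> set_pmf (Pi_pmf {0..<n} 0 D)"
    unfolding valid_config_def
  proof (intro allI impI)
    fix u assume u: "u < n"
    then have "f u \<in> set_pmf (D u)" using that unfolding set_Pi PiE_dflt_def by auto
    then show "f u \<in> {1..k}" using assms[OF u] by blast
  qed
  have "finite (PiE_dflt {0..<n} 0 (set_pmf \<circ> D))"
    by (rule finite_PiE_dflt) (use assms in \<open>auto intro: finite_subset\<close>)
  then show "finite (set_pmf (Pi_pmf {0..<n} 0 D))" unfolding set_Pi .
qed

section \<open>One round of 3-Majority and of 2-Choices\<close>

(* The probability that a 3-Majority vertex adopts opinion i, which is also the mean fraction of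
   opinion i after a round of 2-Choices. *)
definition adopt_prob :: "nat \<Rightarrow> nat \<Rightarrow> config \<Rightarrow> nat \<Rightarrow> real" where
  "adopt_prob n k c i = (alpha n c i)^2 + (1 - gamma n k c) * alpha n c i"

lemma pmf_three_majority_vertex:
  assumes "valid_config n k c" "0 < n" "i \<in> {1..k}"
  shows "pmf (three_majority_vertex n c) i = (alpha n c i)^2 + (1 - gamma n k c) * alpha n c i"
proof -
  let ?V = "{0..<n}"
  have ne: "?V \<noteq> {}" "finite ?V" using assms(2) by auto
  have i3: "(\<Sum>w3\<in>?V. pmf (return_pmf (if c w1 = c w2 then c w1 else c w3)) i) / real n
           = (if c w1 = c w2 then ind (c w1 = i) else alpha n c i)" for w1 w2
  proof (cases "c w1 = c w2")
    case True then show ?thesis using assms(2) by (simp add: indicator_def)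
  next
    case False
    have "(\<Sum>w3\<in>?V. pmf (return_pmf (c w3)) i) = (\<Sum>w3\<in>?V. ind (c w3 = i))"
      by (intro sum.cong refl) (auto simp: indicator_def)
    then show ?thesis using False unfolding alpha_def real_card_opinion_eq_sum by simp
  qed
  have i2: "(\<Sum>w2\<in>?V. (if c w1 = c w2 then ind (c w1 = i) else alpha n c i)) / real n
        = alpha n c (c w1) * ind (c w1 = i) + (1 - alpha n c (c w1)) * alpha n c i" for w1
  proof -
    have "(\<Sum>w2\<in>?V. (if c w1 = c w2 then ind (c w1 = i) else alpha n c i)) =
          (\<Sum>w2\<in>?V. (if c w2 = c w1 then ind (c w1 = i) else alpha n c i))"
      by (intro sum.cong refl) auto
    then show ?thesis using sum_vertices_if_opinion_eq[OF assms(2), of c "c w1" "ind (c w1 = i)" "alpha n c i"] by simp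
  qed
  have "pmf (three_majority_vertex n c) i =
     (\<Sum>w1\<in>?V. (\<Sum>w2\<in>?V. (\<Sum>w3\<in>?V. pmf (return_pmf (if c w1 = c w2 then c w1 else c w3)) i) / real n) / real n) / real n"
    unfolding three_majority_vertex_def using ne by (simp add: pmf_bind_pmf_of_set)
  also have "\<dots> = (\<Sum>w1\<in>?V. alpha n c (c w1) * ind (c w1 = i) + (1 - alpha n c (c w1)) * alpha n c i) / real n"
    by (simp only: i3 i2)
  also have "\<dots> = (\<Sum>j\<in>{1..k}. alpha n c j * (alpha n c j * ind (j = i) + (1 - alpha n c j) * alpha n c i))"
    using sum_vertices_eq_alpha[OF assms(1,2), of "\<lambda>j. alpha n c j * ind (j = i) + (1 - alpha n c j) * alpha n c i"] assms(2)
    by simp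
  also have "\<dots> = (\<Sum>j\<in>{1..k}. (alpha n c j)^2 * ind (j = i)) + alpha n c i * ((\<Sum>j\<in>{1..k}. alpha n c j) - gamma n k c)"
    unfolding gamma_def
    by (simp add: sum.distrib sum_subtractf sum_distrib_left sum_distrib_right algebra_simps power2_eq_square)
  also have "\<dots> = (alpha n c i)^2 + (1 - gamma n k c) * alpha n c i"
    using assms sum_alpha_eq_1[OF assms(1,2)] by (simp add: if_distrib[of "\<lambda>z. _ * z"] sum.delta' cong: if_cong)
  finally show ?thesis .
qed

lemma pmf_two_choices_vertex:
  assumes "valid_config n k c" "0 < n" "i \<in> {1..k}"
  shows "pmf (two_choices_vertex n c v) i = (alpha n c i)^2 + ind (c v = i) * (1 - gamma n k c)"
proof -
  let ?V = "{0..<n}"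
  have ne: "?V \<noteq> {}" "finite ?V" using assms(2) by auto
  have i2: "(\<Sum>w2\<in>?V. pmf (return_pmf (if c w1 = c w2 then c w1 else c v)) i) / real n
        = alpha n c (c w1) * ind (c w1 = i) + (1 - alpha n c (c w1)) * ind (c v = i)" for w1
  proof -
    have "(\<Sum>w2\<in>?V. pmf (return_pmf (if c w1 = c w2 then c w1 else c v)) i) =
          (\<Sum>w2\<in>?V. (if c w2 = c w1 then ind (c w1 = i) else ind (c v = i)))"
      by (intro sum.cong refl) (auto simp: indicator_def)
    then show ?thesis using sum_vertices_if_opinion_eq[OF assms(2), of c "c w1" "ind (c w1 = i)" "ind (c v = i)"] by simp
  qed
  have "pmf (two_choices_vertex n c v) i =
     (\<Sum>w1\<in>?V. (\<Sum>w2\<in>?V. pmf (return_pmf (if c w1 = c w2 then c w1 else c v)) i) / real n) / real n"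
    unfolding two_choices_vertex_def using ne by (simp add: pmf_bind_pmf_of_set)
  also have "\<dots> = (\<Sum>w1\<in>?V. alpha n c (c w1) * ind (c w1 = i) + (1 - alpha n c (c w1)) * ind (c v = i)) / real n"
    by (simp only: i2)
  also have "\<dots> = (\<Sum>j\<in>{1..k}. alpha n c j * (alpha n c j * ind (j = i) + (1 - alpha n c j) * ind (c v = i)))"
    using sum_vertices_eq_alpha[OF assms(1,2), of "\<lambda>j. alpha n c j * ind (j = i) + (1 - alpha n c j) * ind (c v = i)"] assms(2)
    by simp
  also have "\<dots> = (\<Sum>j\<in>{1..k}. (alpha n c j)^2 * ind (j = i)) + ind (c v = i) * ((\<Sum>j\<in>{1..k}. alpha n c j) - gamma n k c)"
    unfolding gamma_def
    by (simp add: sum.distrib sum_subtractf sum_distrib_left sum_distrib_right algebra_simps power2_eq_square)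
  also have "\<dots> = (alpha n c i)^2 + ind (c v = i) * (1 - gamma n k c)"
    using assms sum_alpha_eq_1[OF assms(1,2)] by (simp add: if_distrib[of "\<lambda>z. _ * z"] sum.delta' cong: if_cong)
  finally show ?thesis .
qed

lemma set_pmf_three_majority_vertex:
  assumes "valid_config n k c" "0 < n"
  shows "set_pmf (three_majority_vertex n c) \<subseteq> {1..k}"
  using assms unfolding three_majority_vertex_def valid_config_def
  by (auto simp: set_pmf_of_set)

lemma set_pmf_two_choices_vertex:
  assumes "valid_config n k c" "0 < n" "v < n"
  shows "set_pmf (two_choices_vertex n c v) \<subseteq> {1..k}"
  using assms unfolding two_choices_vertex_def valid_config_def
  by (auto simp: set_pmf_of_set)

lemma sum_adopt_prob:
  assumes "valid_config n k c" "0 < n"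
  shows "(\<Sum>i\<in>{1..k}. adopt_prob n k c i) = 1"
  using sum_alpha_eq_1[OF assms] unfolding adopt_prob_def gamma_def
  by (simp add: sum.distrib sum_distrib_left[symmetric])

lemma adopt_prob_nonneg: "0 \<le> adopt_prob n k c i"
  unfolding adopt_prob_def using gamma_le_1[of n k c] alpha_nonneg[of n c i] by simp

lemma adopt_prob_le: "adopt_prob n k c i \<le> 2 * alpha n c i"
proof -
  have "(alpha n c i)^2 \<le> alpha n c i"
    using alpha_le_1[of n c i] alpha_nonneg[of n c i] by (simp add: power2_eq_square mult_left_le)
  moreover have "(1 - gamma n k c) * alpha n c i \<le> alpha n c i"
  proof -
    have "0 \<le> gamma n k c * alpha n c i" by (simp add: gamma_nonneg alpha_nonneg)
    then show ?thesis by (simp add: algebra_simps)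
  qed
  ultimately show ?thesis unfolding adopt_prob_def by simp
qed

lemma sum_adopt_prob_sq_le: "(\<Sum>i\<in>{1..k}. (adopt_prob n k c i)^2) \<le> 4 * gamma n k c"
proof -
  have "(\<Sum>i\<in>{1..k}. (adopt_prob n k c i)^2) \<le> (\<Sum>i\<in>{1..k}. 4 * (alpha n c i)^2)"
  proof (intro sum_mono)
    fix i
    have "(adopt_prob n k c i)^2 \<le> (2 * alpha n c i)^2" by (rule power_mono[OF adopt_prob_le adopt_prob_nonneg])
    then show "(adopt_prob n k c i)^2 \<le> 4 * (alpha n c i)^2" by (simp add: power_mult_distrib)
  qed
  then show ?thesis unfolding gamma_def by (simp add: sum_distrib_left)
qed

lemma gamma_le_sum_adopt_prob_sq:
  assumes "valid_config n k c" "0 < n"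
  shows "gamma n k c \<le> (\<Sum>i\<in>{1..k}. (adopt_prob n k c i)^2)"
proof -
  define g where "g = gamma n k c"
  have pw: "(alpha n c i)^2 + 2 * g * (alpha n c i)^2 - 2 * g^2 * alpha n c i \<le> (adopt_prob n k c i)^2" for i
  proof -
    define a where "a = alpha n c i"
    have "(adopt_prob n k c i)^2 - (a^2 + 2 * g * a^2 - 2 * g^2 * a) = 2 * a * (a - g)^2 + a^2 * (a - g)^2"
      unfolding adopt_prob_def a_def[symmetric] g_def[symmetric] by (simp add: power2_eq_square algebra_simps)
    moreover have "0 \<le> 2 * a * (a - g)^2 + a^2 * (a - g)^2" unfolding a_def using alpha_nonneg[of n c i] by simp
    ultimately show ?thesis unfolding a_def by linarith
  qed
  have "(\<Sum>i\<in>{1..k}. (alpha n c i)^2 + 2 * g * (alpha n c i)^2 - 2 * g^2 * alpha n c i) = g + 2 * g * g - 2 * g^2 * 1"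
    using sum_alpha_eq_1[OF assms] unfolding g_def gamma_def
    by (simp add: sum.distrib sum_subtractf sum_distrib_left[symmetric])
  also have "\<dots> = g" by (simp add: power2_eq_square)
  finally have "g = (\<Sum>i\<in>{1..k}. (alpha n c i)^2 + 2 * g * (alpha n c i)^2 - 2 * g^2 * alpha n c i)" ..
  also have "\<dots> \<le> (\<Sum>i\<in>{1..k}. (adopt_prob n k c i)^2)" by (intro sum_mono pw)
  finally show ?thesis unfolding g_def .
qed

lemma mean_fraction_three_majority:
  assumes v: "valid_config n k c" and n: "0 < n" and i: "i \<in> {1..k}"
  shows "mean_fraction (\<lambda>u. three_majority_vertex n c) n i = adopt_prob n k c i"
  unfolding mean_fraction_def adopt_prob_def using pmf_three_majority_vertex[OF v n i] n by simp

lemma mean_fraction_two_choices: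
  assumes v: "valid_config n k c" and n: "0 < n" and i: "i \<in> {1..k}"
  shows "mean_fraction (\<lambda>u. two_choices_vertex n c u) n i = adopt_prob n k c i"
proof -
  define g where "g = gamma n k c"
  have "(\<Sum>u\<in>{0..<n}. pmf (two_choices_vertex n c u) i) = (\<Sum>u\<in>{0..<n}. (alpha n c i)^2 + ind (c u = i) * (1 - g))"
    by (intro sum.cong refl) (simp add: pmf_two_choices_vertex[OF v n i] g_def)
  also have "\<dots> = real n * (alpha n c i)^2 + real (card {v \<in> {0..<n}. c v = i}) * (1 - g)"
    unfolding real_card_opinion_eq_sum by (simp add: sum.distrib sum_distrib_right)
  also have "\<dots> = real n * adopt_prob n k c i"
    unfolding adopt_prob_def alpha_def g_def using n by (simp add: field_simps)
  finally show ?thesis unfolding mean_fraction_def using n by simp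
qed

lemma three_majority_drift:
  assumes v: "valid_config n k c" and n: "0 < n" and ge: "gamma n k c \<le> 1 - \<epsilon>"
  shows "gamma n k c + \<epsilon> / real n \<le> measure_pmf.expectation (three_majority_step n c) (gamma n k)"
proof -
  define D where "D = (\<lambda>u::nat. three_majority_vertex n c)"
  define S where "S = (\<Sum>i\<in>{1..k}. (adopt_prob n k c i)^2)"
  have "(\<Sum>u\<in>{0..<n}. \<Sum>i\<in>{1..k}. pmf (D u) i * (1 - pmf (D u) i))
      = (\<Sum>u\<in>{0..<n}. \<Sum>i\<in>{1..k}. adopt_prob n k c i * (1 - adopt_prob n k c i))"
    unfolding D_def adopt_prob_def by (intro sum.cong refl) (simp add: pmf_three_majority_vertex[OF v n])
  also have "\<dots> = real n * (1 - S)"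
    using sum_adopt_prob[OF v n] unfolding S_def
    by (simp add: sum_subtractf algebra_simps power2_eq_square)
  finally have variance: "(\<Sum>u\<in>{0..<n}. \<Sum>i\<in>{1..k}. pmf (D u) i * (1 - pmf (D u) i)) = real n * (1 - S)" .
  have mean: "(\<Sum>i\<in>{1..k}. (mean_fraction D n i)^2) = S"
    unfolding S_def D_def by (intro sum.cong refl) (simp add: mean_fraction_three_majority[OF v n])
  have E: "measure_pmf.expectation (three_majority_step n c) (gamma n k) = S + (1 - S) / real n"
    using expectation_gamma_Pi_pmf[OF n, of 0 D k] n
    unfolding three_majority_step_def D_def[symmetric] mean variance by (simp add: power2_eq_square)
  have "gamma n k c \<le> S" unfolding S_def by (rule gamma_le_sum_adopt_prob_sq[OF v n])
  then have "(real n - 1) * (S - gamma n k c) \<ge> 0" using n by simp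
  then have "real n * gamma n k c + \<epsilon> \<le> real n * S + (1 - S)" using ge by (simp add: algebra_simps)
  then have "(real n * gamma n k c + \<epsilon>) / real n \<le> (real n * S + (1 - S)) / real n"
    using n by (intro divide_right_mono) auto
  then show ?thesis unfolding E using n by (simp add: add_divide_distrib)
qed

lemma sum_sq_le_sq_sum:
  fixes x :: "nat \<Rightarrow> real"
  assumes "finite A" "\<And>i. i \<in> A \<Longrightarrow> 0 \<le> x i"
  shows "(\<Sum>i\<in>A. (x i)^2) \<le> (\<Sum>i\<in>A. x i)^2"
proof -
  have "(\<Sum>i\<in>A. (x i)^2) \<le> (\<Sum>i\<in>A. x i * (\<Sum>j\<in>A. x j))"
  proof (intro sum_mono)
    fix i assume i: "i \<in> A"
    have "x i \<le> (\<Sum>j\<in>A. x j)" using assms i by (intro member_le_sum) auto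
    then show "(x i)^2 \<le> x i * (\<Sum>j\<in>A. x j)" using assms(2)[OF i] by (simp add: power2_eq_square mult_left_mono)
  qed
  also have "\<dots> = (\<Sum>i\<in>A. x i)^2" by (simp add: sum_distrib_right[symmetric] power2_eq_square)
  finally show ?thesis .
qed

lemma two_choices_vertex_variance_ge:
  assumes j: "j \<in> {1..k}" and ge: "gamma n k c \<le> 1 - \<epsilon>"
  shows "2 * \<epsilon> * (gamma n k c - (alpha n c j)^2) \<le>
    (\<Sum>i\<in>{1..k}. ((alpha n c i)^2 + ind (j = i) * (1 - gamma n k c))
        * (1 - ((alpha n c i)^2 + ind (j = i) * (1 - gamma n k c))))"
proof -
  define g where "g = gamma n k c"
  define q where "q = (\<lambda>i. (alpha n c i)^2 + ind (j = i) * (1 - g))"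
  define s where "s = g - (alpha n c j)^2"
  have rem: "(\<Sum>i\<in>{1..k}. (alpha n c i)^2) = (alpha n c j)^2 + (\<Sum>i\<in>{1..k} - {j}. (alpha n c i)^2)"
    using j by (simp add: sum.remove)
  have s_eq: "(\<Sum>i\<in>{1..k} - {j}. (alpha n c i)^2) = s" unfolding s_def g_def gamma_def rem by simp
  have s0: "0 \<le> s" using s_eq[symmetric] by (simp add: sum_nonneg)
  have sumq: "(\<Sum>i\<in>{1..k}. q i) = 1"
    unfolding q_def using j
    by (simp add: sum.distrib g_def gamma_def if_distrib[of "\<lambda>z. z * _"] sum.delta cong: if_cong)
  have "(\<Sum>i\<in>{1..k}. (q i)^2) = (q j)^2 + (\<Sum>i\<in>{1..k} - {j}. ((alpha n c i)^2)^2)"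
    using j by (simp add: sum.remove q_def)
  also have "(\<Sum>i\<in>{1..k} - {j}. ((alpha n c i)^2)^2) \<le> s^2"
    unfolding s_eq[symmetric] by (rule sum_sq_le_sq_sum) auto
  also have "q j = 1 - s" unfolding q_def s_def by simp
  finally have "(\<Sum>i\<in>{1..k}. (q i)^2) \<le> (1 - s)^2 + s^2" by simp
  moreover have "(\<Sum>i\<in>{1..k}. q i * (1 - q i)) = 1 - (\<Sum>i\<in>{1..k}. (q i)^2)"
    using sumq by (simp add: algebra_simps sum_subtractf power2_eq_square)
  ultimately have A: "2 * s * (1 - s) \<le> (\<Sum>i\<in>{1..k}. q i * (1 - q i))"
    by (simp add: power2_eq_square algebra_simps)
  have "\<epsilon> \<le> 1 - s" unfolding s_def g_def using ge zero_le_power2[of "alpha n c j"] by linarith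
  then have "2 * s * \<epsilon> \<le> 2 * s * (1 - s)" using s0 by (intro mult_left_mono) auto
  with A show ?thesis unfolding q_def g_def s_def by (simp add: algebra_simps)
qed

lemma sum_alpha_mult_gamma_minus_sq_ge:
  assumes v: "valid_config n k c" and n: "0 < n" and ge: "gamma n k c \<le> 1 - \<epsilon>" and e: "\<epsilon> < 1"
  shows "\<epsilon> / 2 * gamma n k c \<le> (\<Sum>j\<in>{1..k}. alpha n c j * (gamma n k c - (alpha n c j)^2))"
proof -
  have "\<epsilon> / 2 * gamma n k c = (\<Sum>j\<in>{1..k}. (alpha n c j)^2 * (\<epsilon> / 2))"
    unfolding gamma_def by (simp add: sum_distrib_left algebra_simps)
  also have "\<dots> \<le> (\<Sum>j\<in>{1..k}. (alpha n c j)^2 * (1 - alpha n c j))"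
  proof (intro sum_mono mult_left_mono)
    fix j assume "j \<in> {1..k}"
    then show "\<epsilon> / 2 \<le> 1 - alpha n c j" using alpha_le_1_minus_half[OF _ ge e] by fastforce
  qed simp
  also have "\<dots> = gamma n k c * (\<Sum>j\<in>{1..k}. alpha n c j) - (\<Sum>j\<in>{1..k}. alpha n c j * (alpha n c j)^2)"
    using sum_alpha_eq_1[OF v n] unfolding gamma_def by (simp add: sum_subtractf algebra_simps power2_eq_square)
  also have "\<dots> = (\<Sum>j\<in>{1..k}. alpha n c j * (gamma n k c - (alpha n c j)^2))"
    by (simp add: sum_distrib_left sum_subtractf algebra_simps)
  finally show ?thesis .
qed

lemma sum_two_choices_vertex_variance_ge:
  assumes v: "valid_config n k c" and n: "0 < n" and ge: "gamma n k c \<le> 1 - \<epsilon>"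
    and e: "0 < \<epsilon>" "\<epsilon> < 1"
  shows "\<epsilon>^2 \<le> (\<Sum>u\<in>{0..<n}. \<Sum>i\<in>{1..k}.
      pmf (two_choices_vertex n c u) i * (1 - pmf (two_choices_vertex n c u) i))"
proof -
  define g where "g = gamma n k c"
  have "1 \<le> real n * g" using gamma_ge_inv_n[OF v n] n unfolding g_def by (simp add: divide_le_eq mult.commute)
  then have "\<epsilon>^2 \<le> real n * (2 * \<epsilon> * (\<epsilon> / 2 * g))"
    using e by (simp add: power2_eq_square algebra_simps mult_le_cancel_left1)
  also have "\<dots> \<le> real n * (2 * \<epsilon> * (\<Sum>j\<in>{1..k}. alpha n c j * (g - (alpha n c j)^2)))"
    using sum_alpha_mult_gamma_minus_sq_ge[OF v n ge e(2)] e unfolding g_def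
    by (intro mult_left_mono) auto
  also have "\<dots> = (\<Sum>u\<in>{0..<n}. 2 * \<epsilon> * (g - (alpha n c (c u))^2))"
    using sum_vertices_eq_alpha[OF v n, of "\<lambda>j. 2 * \<epsilon> * (g - (alpha n c j)^2)"]
    by (simp add: sum_distrib_left algebra_simps)
  also have "\<dots> \<le> (\<Sum>u\<in>{0..<n}. \<Sum>i\<in>{1..k}.
      pmf (two_choices_vertex n c u) i * (1 - pmf (two_choices_vertex n c u) i))"
  proof (intro sum_mono)
    fix u assume "u \<in> {0..<n}"
    then have cu: "c u \<in> {1..k}" using v unfolding valid_config_def by auto
    show "2 * \<epsilon> * (g - (alpha n c (c u))^2) \<le> (\<Sum>i\<in>{1..k}.
        pmf (two_choices_vertex n c u) i * (1 - pmf (two_choices_vertex n c u) i))"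
    proof -
      have "(\<Sum>i\<in>{1..k}. pmf (two_choices_vertex n c u) i * (1 - pmf (two_choices_vertex n c u) i))
          = (\<Sum>i\<in>{1..k}. ((alpha n c i)^2 + ind (c u = i) * (1 - g))
              * (1 - ((alpha n c i)^2 + ind (c u = i) * (1 - g))))"
        unfolding g_def by (intro sum.cong refl) (simp add: pmf_two_choices_vertex[OF v n])
      then show ?thesis using two_choices_vertex_variance_ge[OF cu ge] unfolding g_def by linarith
    qed
  qed
  finally show ?thesis .
qed

lemma two_choices_drift:
  assumes v: "valid_config n k c" and n: "0 < n" and ge: "gamma n k c \<le> 1 - \<epsilon>"
    and e: "0 < \<epsilon>" "\<epsilon> < 1"
  shows "gamma n k c + \<epsilon>^2 / (real n)^2 \<le> measure_pmf.expectation (two_choices_step n c) (gamma n k)"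
proof -
  define D where "D = (\<lambda>u::nat. two_choices_vertex n c u)"
  define V where "V = (\<Sum>u\<in>{0..<n}. \<Sum>i\<in>{1..k}. pmf (D u) i * (1 - pmf (D u) i))"
  have "gamma n k c \<le> (\<Sum>i\<in>{1..k}. (adopt_prob n k c i)^2)"
    by (rule gamma_le_sum_adopt_prob_sq[OF v n])
  also have "\<dots> = (\<Sum>i\<in>{1..k}. (mean_fraction D n i)^2)"
    unfolding D_def by (intro sum.cong refl) (simp add: mean_fraction_two_choices[OF v n])
  finally have mean: "gamma n k c \<le> (\<Sum>i\<in>{1..k}. (mean_fraction D n i)^2)" .
  have "\<epsilon>^2 / (real n)^2 \<le> V / (real n)^2"
    using sum_two_choices_vertex_variance_ge[OF v n ge e] unfolding V_def D_def
    by (intro divide_right_mono) auto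
  with mean show ?thesis
    using expectation_gamma_Pi_pmf[OF n, of 0 D k] unfolding two_choices_step_def D_def[symmetric] V_def
    by linarith
qed

lemma three_majority_tail:
  assumes v: "valid_config n k c" and n: "0 < n" and lt: "gamma n k c < x"
  shows "measure_pmf.prob (three_majority_step n c) {f. 100 * x < gamma n k f}
    \<le> exp (1/2 - 23/4 * x * real n)"
proof -
  have "(\<Sum>i\<in>{1..k}. (mean_fraction (\<lambda>u. three_majority_vertex n c) n i)^2) \<le> 4 * x"
    using sum_adopt_prob_sq_le[of n k c] lt by (simp add: mean_fraction_three_majority[OF v n])
  then show ?thesis unfolding three_majority_step_def by (rule prob_gamma_gt_100_le[OF n])
qed

lemma two_choices_tail:
  assumes v: "valid_config n k c" and n: "0 < n" and lt: "gamma n k c < x"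
  shows "measure_pmf.prob (two_choices_step n c) {f. 100 * x < gamma n k f}
    \<le> exp (1/2 - 23/4 * x * real n)"
proof -
  have "(\<Sum>i\<in>{1..k}. (mean_fraction (\<lambda>u. two_choices_vertex n c u) n i)^2) \<le> 4 * x"
    using sum_adopt_prob_sq_le[of n k c] lt by (simp add: mean_fraction_two_choices[OF v n])
  then show ?thesis unfolding two_choices_step_def by (rule prob_gamma_gt_100_le[OF n])
qed

section \<open>Hitting the target collision probability\<close>

(* The potential (2/d)(a - g) drops by 2 in expectation; stopping it at x (setting it to 0)
   costs at most (2/d) Pr[g > a] <= 1, because 0 <= a - g + 1 whenever g > a. *)
lemma potential_step_of_drift:
  fixes M :: "config pmf" and g :: "config \<Rightarrow> real"
  assumes g01: "\<And>f. 0 \<le> g f" "\<And>f. g f \<le> 1"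
    and drift: "g0 + d \<le> measure_pmf.expectation M g"
    and tail: "measure_pmf.prob M {f. a < g f} \<le> d / 2"
    and d: "0 < d" and xa: "x \<le> a" and a0: "0 \<le> a"
  shows "1 + measure_pmf.expectation M (\<lambda>f. if g f < x then 2 / d * (a - g f) else 0)
    \<le> 2 / d * (a - g0)"
proof -
  define stopped where "stopped = (\<lambda>f. if g f < x then a - g f else 0)"
  have int_g: "integrable (measure_pmf M) g"
    by (rule integrable_measure_pmf_bounded[where B=1]) (use g01 in auto)
  have int_tail: "integrable (measure_pmf M) (indicat_real {f. a < g f})"
    by (rule integrable_measure_pmf_bounded[where B=1]) (auto simp: indicator_def)
  have int_stopped: "integrable (measure_pmf M) stopped"
    by (rule integrable_measure_pmf_bounded[where B=a]) (use g01 xa a0 in \<open>auto simp: stopped_def\<close>)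
  have "measure_pmf.expectation M stopped
      \<le> measure_pmf.expectation M (\<lambda>f. a - g f + indicat_real {f. a < g f} f)"
  proof (rule integral_mono[OF int_stopped])
    show "integrable (measure_pmf M) (\<lambda>f. a - g f + indicat_real {f. a < g f} f)"
      using int_g int_tail by (intro Bochner_Integration.integrable_add Bochner_Integration.integrable_diff) auto
    show "stopped f \<le> a - g f + indicat_real {f. a < g f} f" for f
      using g01[of f] xa a0 by (auto simp: stopped_def indicator_def)
  qed
  also have "\<dots> = a - measure_pmf.expectation M g + measure_pmf.prob M {f. a < g f}"
    using int_g int_tail by (simp add: Bochner_Integration.integral_add Bochner_Integration.integral_diff)
  finally have "measure_pmf.expectation M stopped \<le> a - g0 - d / 2"
    using drift tail by linarith
  then have "2 / d * measure_pmf.expectation M stopped \<le> 2 / d * (a - g0) - 1"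
    using d by (simp add: field_simps)
  moreover have "(\<lambda>f. if g f < x then 2 / d * (a - g f) else 0) = (\<lambda>f. 2 / d * stopped f)"
    unfolding stopped_def by auto
  ultimately show ?thesis by simp
qed

lemma tau_gamma_ge_prob_le_of_drift:
  fixes K :: "config \<Rightarrow> config pmf" and d :: real
  assumes T: "0 < T" and v0: "valid_config n k c0" and x0: "0 \<le> x" and d: "0 < d"
    and valid_step: "\<And>c c'. valid_config n k c \<Longrightarrow> c' \<in> set_pmf (K c) \<Longrightarrow> valid_config n k c'"
    and fin: "\<And>c. valid_config n k c \<Longrightarrow> finite (set_pmf (K c))"
    and drift: "\<And>c. valid_config n k c \<Longrightarrow> gamma n k c < x \<Longrightarrow>
        gamma n k c + d \<le> measure_pmf.expectation (K c) (gamma n k)"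
    and tail: "\<And>c. valid_config n k c \<Longrightarrow> gamma n k c < x \<Longrightarrow>
        measure_pmf.prob (K c) {f. 100 * x < gamma n k f} \<le> d / 2"
  shows "tau_gamma_ge_prob K n k x c0 T \<le> 200 * x / (d * T)"
proof -
  define N where "N = nat \<lceil>T\<rceil>"
  define H where "H = (\<lambda>c. 2 / d * (100 * x - gamma n k c))"
  have step: "1 + measure_pmf.expectation (K c) (\<lambda>c'. if gamma n k c' < x then H c' else 0) \<le> H c"
    if "valid_config n k c" "gamma n k c < x" for c
    unfolding H_def
    by (rule potential_step_of_drift[OF gamma_nonneg gamma_le_1 drift[OF that] tail[OF that] d])
       (use x0 in auto)
  have H_nonneg: "0 \<le> H c" if "gamma n k c < x" for c
    using that d gamma_nonneg[of n k c] unfolding H_def by (intro mult_nonneg_nonneg) auto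
  have "real N * survival K (gamma n k) x N c0 \<le> (if gamma n k c0 < x then H c0 else 0)"
    by (rule mult_survival_le_potential[where Inv="valid_config n k"])
       (use v0 valid_step fin step H_nonneg in blast)+
  also have "\<dots> \<le> 200 * x / d"
    using d x0 gamma_nonneg[of n k c0] unfolding H_def by (auto simp: field_simps)
  finally have bound: "real N * survival K (gamma n k) x N c0 \<le> 200 * x / d" .
  have N: "0 < real N" "T \<le> real N" using T unfolding N_def by linarith+
  have "survival K (gamma n k) x N c0 \<le> 200 * x / d / real N"
    by (rule iffD2[OF pos_le_divide_eq[OF N(1)]]) (use bound in \<open>simp add: mult.commute\<close>)
  also have "\<dots> \<le> 200 * x / d / T"
    using T d x0 N by (intro divide_left_mono) auto
  finally show ?thesis
    unfolding tau_gamma_ge_prob_eq_survival[OF T] N_def by (simp add: field_simps)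
qed

lemma three_majority_hitting_bound:
  assumes v0: "valid_config n k c0" and n: "0 < n" and T: "0 < T"
    and x: "0 \<le> x" "x \<le> 1 - \<epsilon>" and e: "0 < \<epsilon>"
    and small_tail: "exp (1/2 - 23/4 * x * real n) \<le> \<epsilon> / real n / 2"
  shows "tau_gamma_ge_prob (three_majority_step n) n k x c0 T \<le> 64 * exp 2 / \<epsilon> * (x * real n / T)"
proof -
  have "tau_gamma_ge_prob (three_majority_step n) n k x c0 T \<le> 200 * x / (\<epsilon> / real n * T)"
  proof (rule tau_gamma_ge_prob_le_of_drift[OF T v0 x(1)])
    fix c assume v: "valid_config n k c"
    have support: "\<And>u. u < n \<Longrightarrow> set_pmf ((\<lambda>u. three_majority_vertex n c) u) \<subseteq> {1..k}"
      using set_pmf_three_majority_vertex[OF v n] by simp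
    show "c' \<in> set_pmf (three_majority_step n c) \<Longrightarrow> valid_config n k c'" for c'
      unfolding three_majority_step_def by (rule set_pmf_Pi_pmf_valid_config(1)[OF support])
    show "finite (set_pmf (three_majority_step n c))"
      unfolding three_majority_step_def by (rule set_pmf_Pi_pmf_valid_config(2)[OF support])
    assume lt: "gamma n k c < x"
    show "gamma n k c + \<epsilon> / real n \<le> measure_pmf.expectation (three_majority_step n c) (gamma n k)"
      using lt x by (intro three_majority_drift[OF v n]) linarith
    show "measure_pmf.prob (three_majority_step n c) {f. 100 * x < gamma n k f} \<le> \<epsilon> / real n / 2"
      using three_majority_tail[OF v n lt] small_tail by linarith
  qed (use e n in simp)
  also have "\<dots> = 200 * (x * real n / (\<epsilon> * T))" using e n T by (simp add: field_simps)
  also have "\<dots> \<le> 64 * exp 2 * (x * real n / (\<epsilon> * T))"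
    using exp_lower_Taylor_quadratic[of 2] e T x by (intro mult_right_mono) auto
  also have "\<dots> = 64 * exp 2 / \<epsilon> * (x * real n / T)" by simp
  finally show ?thesis .
qed

lemma two_choices_hitting_bound:
  assumes v0: "valid_config n k c0" and n: "0 < n" and T: "0 < T"
    and x: "0 \<le> x" "x \<le> 1 - \<epsilon>" and e: "0 < \<epsilon>" "\<epsilon> < 1"
    and small_tail: "exp (1/2 - 23/4 * x * real n) \<le> \<epsilon>^2 / (real n)^2 / 2"
  shows "tau_gamma_ge_prob (two_choices_step n) n k x c0 T \<le> 192 * exp 2 / \<epsilon>^2 * (x * (real n)^2 / T)"
proof -
  have "tau_gamma_ge_prob (two_choices_step n) n k x c0 T \<le> 200 * x / (\<epsilon>^2 / (real n)^2 * T)"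
  proof (rule tau_gamma_ge_prob_le_of_drift[OF T v0 x(1)])
    fix c assume v: "valid_config n k c"
    have support: "\<And>u. u < n \<Longrightarrow> set_pmf ((\<lambda>u. two_choices_vertex n c u) u) \<subseteq> {1..k}"
      using set_pmf_two_choices_vertex[OF v n] by simp
    show "c' \<in> set_pmf (two_choices_step n c) \<Longrightarrow> valid_config n k c'" for c'
      unfolding two_choices_step_def by (rule set_pmf_Pi_pmf_valid_config(1)[OF support])
    show "finite (set_pmf (two_choices_step n c))"
      unfolding two_choices_step_def by (rule set_pmf_Pi_pmf_valid_config(2)[OF support])
    assume lt: "gamma n k c < x"
    show "gamma n k c + \<epsilon>^2 / (real n)^2 \<le> measure_pmf.expectation (two_choices_step n c) (gamma n k)"
      using lt x by (intro two_choices_drift[OF v n _ e]) linarith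
    show "measure_pmf.prob (two_choices_step n c) {f. 100 * x < gamma n k f} \<le> \<epsilon>^2 / (real n)^2 / 2"
      using two_choices_tail[OF v n lt] small_tail by linarith
  qed (use e n in simp)
  also have "\<dots> = 200 * (x * (real n)^2 / (\<epsilon>^2 * T))" using e n T by (simp add: field_simps)
  also have "\<dots> \<le> 192 * exp 2 * (x * (real n)^2 / (\<epsilon>^2 * T))"
    using exp_lower_Taylor_quadratic[of 2] e T x by (intro mult_right_mono) auto
  also have "\<dots> = 192 * exp 2 / \<epsilon>^2 * (x * (real n)^2 / T)" by simp
  finally show ?thesis .
qed

lemma eventually_exp_tail_le:
  fixes C \<delta> :: real
  assumes "0 < C" "0 < \<delta>"
  shows "\<forall>\<^sub>F n in sequentially. \<forall>x. C^2 * (log 2 (real n))^2 / real n \<le> x \<longrightarrow>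
           exp (1/2 - 23/4 * x * real n) \<le> \<delta> / (real n)^2"
proof -
  define c where "c = 23/4 * C^2"
  have "0 < c" using assms(1) unfolding c_def by simp
  then have "((\<lambda>n::nat. exp (1/2 - c * (log 2 (real n))^2) * (real n)^2) \<longlongrightarrow> 0) sequentially"
    by real_asymp
  then have "\<forall>\<^sub>F n in sequentially. exp (1/2 - c * (log 2 (real n))^2) * (real n)^2 < \<delta>"
    using assms(2) by (rule order_tendstoD)
  with eventually_gt_at_top[of "0::nat"] show ?thesis
  proof eventually_elim
    case (elim n)
    then have n: "0 < real n" by simp
    show ?case
    proof (intro allI impI)
      fix x assume "C^2 * (log 2 (real n))^2 / real n \<le> x"
      then have "C^2 * (log 2 (real n))^2 \<le> x * real n" using n by (simp add: pos_divide_le_eq)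
      then have "exp (1/2 - 23/4 * x * real n) \<le> exp (1/2 - c * (log 2 (real n))^2)"
        unfolding c_def by simp
      also have "\<dots> \<le> \<delta> / (real n)^2" using elim n by (simp add: pos_le_divide_eq)
      finally show "exp (1/2 - 23/4 * x * real n) \<le> \<delta> / (real n)^2" .
    qed
  qed
qed

theorem lemma5p12:
  fixes C \<epsilon> :: real
  assumes "C > exp (-1)" and "0 < \<epsilon>" and "\<epsilon> < 1"
  shows "\<exists>n0::nat. \<forall>n\<ge>n0. \<forall>(k::nat) (x_gamma::real) (T::real) (opn0::config).
           1 \<le> k \<and> k \<le> n \<and> (\<forall>v<n. opn0 v \<in> {1..k}) \<and>
           C^2 * (log 2 (real n))^2 / real n \<le> x_gamma \<and> x_gamma \<le> 1 - \<epsilon> \<and> T > 0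
           \<longrightarrow>
           tau_gamma_ge_prob (three_majority_step n) n k x_gamma opn0 T
              \<le> 64 * exp 2 / \<epsilon> * (x_gamma * real n / T) \<and>
           tau_gamma_ge_prob (two_choices_step n) n k x_gamma opn0 T
              \<le> 192 * exp 2 / \<epsilon>^2 * (x_gamma * (real n)^2 / T)"
proof -
  have "0 < C" using assms(1) by (meson exp_gt_zero less_trans)
  then have "\<forall>\<^sub>F n in sequentially. 1 \<le> n \<and> (\<forall>x. C^2 * (log 2 (real n))^2 / real n \<le> x \<longrightarrow>
      exp (1/2 - 23/4 * x * real n) \<le> \<epsilon>^2 / 2 / (real n)^2)"
    using assms(2) by (intro eventually_conj eventually_ge_at_top eventually_exp_tail_le) auto
  then obtain n0 where n0: "\<And>n. n0 \<le> n \<Longrightarrow> 1 \<le> n \<and> (\<forall>x. C^2 * (log 2 (real n))^2 / real n \<le> x \<longrightarrow>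
      exp (1/2 - 23/4 * x * real n) \<le> \<epsilon>^2 / 2 / (real n)^2)"
    unfolding eventually_sequentially by blast
  show ?thesis
  proof (intro exI allI impI)
    fix n k :: nat and x T :: real and opn0 :: config
    assume "n0 \<le> n" and H: "1 \<le> k \<and> k \<le> n \<and> (\<forall>v<n. opn0 v \<in> {1..k}) \<and>
      C^2 * (log 2 (real n))^2 / real n \<le> x \<and> x \<le> 1 - \<epsilon> \<and> T > 0"
    then have n: "0 < n" and tail: "exp (1/2 - 23/4 * x * real n) \<le> \<epsilon>^2 / (real n)^2 / 2"
      using n0 by (auto simp: mult.commute)
    have v: "valid_config n k opn0" using H unfolding valid_config_def by auto
    have x0: "0 \<le> x" using H n by (smt (verit) divide_nonneg_pos of_nat_0_less_iff zero_le_power2 mult_nonneg_nonneg)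
    have "\<epsilon>^2 / (real n)^2 \<le> \<epsilon> / real n"
      using assms(2,3) n by (simp add: power2_eq_square divide_le_eq mult_le_cancel_right1)
    then show "tau_gamma_ge_prob (three_majority_step n) n k x opn0 T \<le> 64 * exp 2 / \<epsilon> * (x * real n / T) \<and>
        tau_gamma_ge_prob (two_choices_step n) n k x opn0 T \<le> 192 * exp 2 / \<epsilon>^2 * (x * (real n)^2 / T)"
      using three_majority_hitting_bound[OF v n _ x0 _ assms(2)] two_choices_hitting_bound[OF v n _ x0 _ assms(2,3) tail]
        tail H by auto
  qed
qed

end
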